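(* Let $\{(\boldsymbol{x}_j,y_j)\}_{j=1}^n\subset\mathbb{R}^d\times\mathbb{R}$ be a training set and let $f\in\mathcal{F}_k$ be a stable solution for SGD with step size $\eta>0$. Assume that none of the knots of $f$ contains a training point $\boldsymbol{x}_j$. Then $$\|f\|_{\mathcal{R},g}\le \frac{1}{\eta}-\frac{1}{2},$$ where $$\|f\|_{\mathcal{R},g}=\int_{\mathbb{S}^{d-1}\times\mathbb{R}}\big|[(\mathcal{R}^* )^{-1}\Delta f](\boldsymbol{v},b)\big|\,g(\boldsymbol{v},b)\,\mathrm{d}s(\boldsymbol{v})\,\mathrm{d}b,$$ with $g(\boldsymbol{v},b)=\min\big(\tilde g(\boldsymbol{v},b),\tilde g(-\boldsymbol{v},-b)\big)$ and $$\tilde g(\boldsymbol{v},b)=\mathbb{P}^2(\boldsymbol{X}^\top\boldsymbol{v}>b)\,\mathbb{E}\big[\boldsymbol{X}^\top\boldsymbol{v}-b\,\big|\,\boldsymbol{X}^\top\boldsymbol{v}>b\big]\sqrt{\big\|\mathbb{E}[\boldsymbol{X}\mid\boldsymbol{X}^\top\boldsymbol{v}>b]\big\|^2+1},$$ $\boldsymbol{X}$ being drawn uniformly at random from $\{\boldsymbol{x}_j\}_{j=1}^n$.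
   Context: $\sigma(t)=\max(t,0)$. $\mathcal{F}_k$ is the set of functions $f(\boldsymbol{x})=\sum_{i=1}^k w^{(2)}_i\sigma(\boldsymbol{x}^\top\boldsymbol{w}^{(1)}_i+b^{(1)}_i)+b^{(2)}$ on $\mathbb{R}^d$; the parameter vector $\boldsymbol{\theta}=(\boldsymbol{w}^{(1)}_1,\dots,\boldsymbol{w}^{(1)}_k,\boldsymbol{b}^{(1)},\boldsymbol{w}^{(2)},b^{(2)})\in\mathbb{R}^{(d+2)k+1}$ determines $f_{\boldsymbol\theta}\in\mathcal{F}_k$, and a minimum $\boldsymbol\theta^*$ "corresponds to" $f$ if $f_{\boldsymbol\theta^*}=f$. A knot of $f$ is a boundary between two linear pieces of $f$. The loss is $\mathcal{L}(\boldsymbol\theta)=\frac{1}{2n}\sum_{j=1}^n(f_{\boldsymbol\theta}(\boldsymbol{x}_j)-y_j)^2=\frac1n\sum_j\ell_j(\boldsymbol\theta)$; a solution is $f\in\mathcal{F}_k$ with $f(\boldsymbol{x}_j)=y_j$ for all $j$. SGD: $\boldsymbol\theta_{t+1}=\boldsymbol\theta_t-\eta\nabla\hat{\mathcal{L}}_t(\boldsymbol\theta_t)$, $\hat{\mathcal{L}}_t=\frac1B\sum_{j\in\mathfrak{B}_t}\ell_j$, batches $\mathfrak{B}_t$ of size $B$ drawn uniformly from the dataset independently across iterations. A twice differentiable minimum $\boldsymbol\theta^*$ of $\mathcal{L}$ is $\varepsilon$ linearly stable if for the linearized dynamics $\boldsymbol\theta_{t+1}=\boldsymbol\theta_t-\eta(\nabla\hat{\mathcal{L}}_t(\boldsymbol\theta^*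 )+\nabla^2\hat{\mathcal{L}}_t(\boldsymbol\theta^* )(\boldsymbol\theta_t-\boldsymbol\theta^* ))$ and every $\boldsymbol\theta_0$ in the $\varepsilon$-ball around $\boldsymbol\theta^*$, $\limsup_{t\to\infty}\mathbb{E}\|\boldsymbol\theta_t-\boldsymbol\theta^*\|\le\varepsilon$. A solution $f$ is stable for step size $\eta$ if some minimum $\boldsymbol\theta^*$ of $\mathcal{L}$ corresponding to $f$ is linearly stable for SGD with step size $\eta$. Radon transform: $\mathcal{R}\varphi(\boldsymbol{v},b)=\int_{\boldsymbol{v}^\top\boldsymbol{x}=b}\varphi\,\mathrm{d}s$ for $(\boldsymbol v,b)\in\mathbb{S}^{d-1}\times\mathbb{R}$; dual $\mathcal{R}^*\psi(\boldsymbol{x})=\int_{\mathbb{S}^{d-1}}\psi(\boldsymbol v,\boldsymbol v^\top\boldsymbol x)\,\mathrm{d}s(\boldsymbol v)$. $\Delta f$ is the distributional Laplacian, and $(\mathcal{R}^* )^{-1}\Delta f$ is the distribution on $\mathbb{S}^{d-1}\times\mathbb{R}$ defined by $\langle(\mathcal{R}^* )^{-1}\Delta f,\phi\rangle=\langle\Delta f,\mathcal{R}^{-1}\phi\rangle$ for $\phi$ in $\mathcal{S}_H$, the image of the Schwartz space $\mathcal{S}(\mathbb{R}^d)$ under $\mathcal{R}$. For $f(\boldsymbol x)=\sum_{i}a_i\sigma(\boldsymbol v_i^\top\boldsymbol x-b_i)+\boldsymbol{q}^\top\boldsymbol x+c$ with $\|\boldsymbol v_i\|=1$, one has $(\mathcal{R}^*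 )^{-1}\Delta f=\sum_i a_i\delta_{(\boldsymbol v_i,b_i)}$, and the integral $\|f\|_{\mathcal{R},g}$ is the integral of $g$ against the total variation measure of this measure (equal to $\sum_i|a_i|g(\boldsymbol v_i,b_i)$ when the pairs $(\boldsymbol v_i,b_i)$ are distinct and the $a_i\neq0$). *)

theory Defs
  imports "HOL-Analysis.Analysis"
begin

definition relu :: "real \<Rightarrow> real" where
  "relu t = max t 0"

text \<open>The number of neurons k is the cardinality of the finite index type 'k;
  the input space R^d is the Euclidean space 'a.\<close>
type_synonym ('a, 'k) params = "('a ^ 'k) \<times> (real ^ 'k) \<times> (real ^ 'k) \<times> real"

definition net :: "('a::euclidean_space, 'k::finite) params \<Rightarrow> 'a \<Rightarrow> real" where
  "net \<theta> x = (case \<theta> of (W1, b1, w2, b2) \<Rightarrow>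
      (\<Sum>i\<in>UNIV. w2 $ i * relu (x \<bullet> (W1 $ i) + b1 $ i)) + b2)"

definition sample_loss ::
  "(nat \<Rightarrow> 'a::euclidean_space) \<Rightarrow> (nat \<Rightarrow> real) \<Rightarrow> nat \<Rightarrow> ('a, 'k::finite) params \<Rightarrow> real" where
  "sample_loss xs ys j \<theta> = (net \<theta> (xs j) - ys j)^2 / 2"

definition loss ::
  "(nat \<Rightarrow> 'a::euclidean_space) \<Rightarrow> (nat \<Rightarrow> real) \<Rightarrow> nat \<Rightarrow> ('a, 'k::finite) params \<Rightarrow> real" where
  "loss xs ys n \<theta> = (\<Sum>j<n. sample_loss xs ys j \<theta>) / real n"

definition twice_diff_at ::
  "('p::euclidean_space \<Rightarrow> real) \<Rightarrow> 'p \<Rightarrow> ('p \<Rightarrow> 'p) \<Rightarrow> ('p \<Rightarrow> 'p) \<Rightarrow> bool" where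
  "twice_diff_at l th0 G H \<longleftrightarrow>
     (\<exists>e>0. \<forall>th\<in>ball th0 e. (l has_derivative (\<lambda>h. G th \<bullet> h)) (at th)) \<and>
     (G has_derivative H) (at th0)"

text \<open>Batches: subsets of the index set of size B, drawn uniformly (without replacement).\<close>
definition batches :: "nat \<Rightarrow> nat \<Rightarrow> nat set set" where
  "batches n B = {S. S \<subseteq> {..<n} \<and> card S = B}"

definition lin_step ::
  "real \<Rightarrow> nat \<Rightarrow> (nat \<Rightarrow> 'p::euclidean_space \<Rightarrow> 'p) \<Rightarrow> (nat \<Rightarrow> 'p \<Rightarrow> 'p) \<Rightarrow> 'p \<Rightarrow> 'p \<Rightarrow> nat set \<Rightarrow> 'p" where
  "lin_step \<eta> B G H ths th S =
     th - \<eta> *\<^sub>R ((1 / real B) *\<^sub>R (\<Sum>j\<in>S. G j ths + H j (th - ths)))"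

definition lin_iter ::
  "real \<Rightarrow> nat \<Rightarrow> (nat \<Rightarrow> 'p::euclidean_space \<Rightarrow> 'p) \<Rightarrow> (nat \<Rightarrow> 'p \<Rightarrow> 'p) \<Rightarrow> 'p \<Rightarrow> 'p \<Rightarrow> nat set list \<Rightarrow> 'p" where
  "lin_iter \<eta> B G H ths th0 bs = foldl (lin_step \<eta> B G H ths) th0 bs"

text \<open>E || theta_t - theta* ||, expectation over independent uniform batches.\<close>
definition expected_dev ::
  "nat \<Rightarrow> nat \<Rightarrow> real \<Rightarrow> (nat \<Rightarrow> 'p::euclidean_space \<Rightarrow> 'p) \<Rightarrow> (nat \<Rightarrow> 'p \<Rightarrow> 'p) \<Rightarrow> 'p \<Rightarrow> 'p \<Rightarrow> nat \<Rightarrow> real" where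
  "expected_dev n B \<eta> G H ths th0 t =
     (\<Sum>bs\<in>{bs. length bs = t \<and> set bs \<subseteq> batches n B}.
        norm (lin_iter \<eta> B G H ths th0 bs - ths)) / real (card (batches n B)) ^ t"

definition eps_linearly_stable ::
  "(nat \<Rightarrow> 'a::euclidean_space) \<Rightarrow> (nat \<Rightarrow> real) \<Rightarrow> nat \<Rightarrow> nat \<Rightarrow> real \<Rightarrow> ('a, 'k::finite) params \<Rightarrow> real \<Rightarrow> bool" where
  "eps_linearly_stable xs ys n B \<eta> ths \<epsilon> \<longleftrightarrow>
     (\<exists>e>0. \<forall>th\<in>ball ths e. loss xs ys n ths \<le> loss xs ys n th) \<and>
     (\<exists>G H. (\<forall>j<n. twice_diff_at (sample_loss xs ys j) ths (G j) (H j)) \<and>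
        (\<forall>th0\<in>ball ths \<epsilon>.
           limsup (\<lambda>t. ereal (expected_dev n B \<eta> G H ths th0 t)) \<le> ereal \<epsilon>))"

definition linearly_stable ::
  "(nat \<Rightarrow> 'a::euclidean_space) \<Rightarrow> (nat \<Rightarrow> real) \<Rightarrow> nat \<Rightarrow> nat \<Rightarrow> real \<Rightarrow> ('a, 'k::finite) params \<Rightarrow> bool" where
  "linearly_stable xs ys n B \<eta> ths \<longleftrightarrow> (\<exists>\<epsilon>>0. eps_linearly_stable xs ys n B \<eta> ths \<epsilon>)"

definition stable_solution ::
  "'k::finite itself \<Rightarrow> (nat \<Rightarrow> 'a::euclidean_space) \<Rightarrow> (nat \<Rightarrow> real) \<Rightarrow> nat \<Rightarrow> nat \<Rightarrow> real \<Rightarrow> ('a \<Rightarrow> real) \<Rightarrow> bool" where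
  "stable_solution _ xs ys n B \<eta> f \<longleftrightarrow>
     (\<forall>j<n. f (xs j) = ys j) \<and>
     (\<exists>ths :: ('a, 'k) params. net ths = f \<and> linearly_stable xs ys n B \<eta> ths)"

text \<open>Union of all knots (boundaries between linear pieces): the closure of the set of
  points where f is not differentiable.\<close>
definition knot_set :: "('a::euclidean_space \<Rightarrow> real) \<Rightarrow> 'a set" where
  "knot_set f = closure {x. \<not> f differentiable (at x)}"

text \<open>X uniform on the training points (indices j < n).\<close>
definition g_tilde :: "(nat \<Rightarrow> 'a::euclidean_space) \<Rightarrow> nat \<Rightarrow> 'a \<Rightarrow> real \<Rightarrow> real" where
  "g_tilde xs n v b =
     (let S = {j. j < n \<and> xs j \<bullet> v > b} in
      if S = {} then 0 else
        (real (card S) / real n)^2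
        * ((\<Sum>j\<in>S. xs j \<bullet> v - b) / real (card S))
        * sqrt ((norm ((1 / real (card S)) *\<^sub>R (\<Sum>j\<in>S. xs j)))^2 + 1))"

definition g_weight :: "(nat \<Rightarrow> 'a::euclidean_space) \<Rightarrow> nat \<Rightarrow> 'a \<Rightarrow> real \<Rightarrow> real" where
  "g_weight xs n v b = min (g_tilde xs n v b) (g_tilde xs n (- v) (- b))"

text \<open>For such a representation (R^* )^(-1) Delta f is the (even) measure sum a_i delta_(v_i,b_i).\<close>
definition canon_repr ::
  "('a::euclidean_space \<Rightarrow> real) \<Rightarrow> nat \<Rightarrow> (nat \<Rightarrow> real) \<Rightarrow> (nat \<Rightarrow> 'a) \<Rightarrow> (nat \<Rightarrow> real) \<Rightarrow> 'a \<Rightarrow> real \<Rightarrow> bool" where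
  "canon_repr f m a v b q c \<longleftrightarrow>
     (\<forall>i<m. norm (v i) = 1 \<and> a i \<noteq> 0) \<and>
     (\<forall>i<m. \<forall>j<m. i \<noteq> j \<longrightarrow> (v i, b i) \<noteq> (v j, b j) \<and> (v i, b i) \<noteq> (- v j, - b j)) \<and>
     (\<forall>x. f x = (\<Sum>i<m. a i * relu (v i \<bullet> x - b i)) + q \<bullet> x + c)"

text \<open>The integral of g against the total variation of (R^* )^(-1) Delta f.\<close>
definition radon_norm :: "('a::euclidean_space \<Rightarrow> real \<Rightarrow> real) \<Rightarrow> ('a \<Rightarrow> real) \<Rightarrow> real" where
  "radon_norm g f = (SOME r. \<exists>m a v b q c. canon_repr f m a v b q c \<and>
                        r = (\<Sum>i<m. \<bar>a i\<bar> * g (v i) (b i)))"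

end

(*
  Linear stability bounds the mean Hessian H of the sample losses: if u . H u > (2/eta) |u|^2
  for some u, the expected linearized SGD iterate evolves by I - eta H, which multiplies some
  direction by a factor below -1, and the expected deviation grows geometrically. At an
  interpolating minimum the Hessian of the j-th sample loss is the Gauss-Newton term g_j g_j^T,
  where g_j is the parameter gradient of the network output at x_j (twice differentiability also
  keeps every x_j off the kink of every neuron). For u the mean of the g_j, Cauchy-Schwarz gives
  |u|^4 <= mean_j (g_j . u)^2 = u . H u, hence |u|^2 <= 2/eta.

  On the other side, a neuron w2 relu(W1 . x + b1) contributes
  |w2| |W1| g(W1/|W1|, -b1/|W1|) <= |w2| Z sqrt(|S|^2 + p^2) to the weighted Radon norm, where
  Z, w2 S and w2 p are exactly the components of u belonging to that neuron; by AM-GM this is at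
  most half their squared norm, and the output bias contributes the remaining 1 to |u|^2. So the
  norm is at most (|u|^2 - 1)/2 <= 1/eta - 1/2.

  Since radon_norm is defined through some canonical representation, any representation with
  unit normals has to be compared with it: the canonical coefficient of a hyperplane is the sum
  of the coefficients of the neurons on that hyperplane, because an identically vanishing
  combination of ReLU ridges has zero coefficient sum on every hyperplane, as one sees by
  restricting it to a line that crosses this hyperplane and no other one.
*)

theory Submission
  imports Defs
begin

section \<open>Vanishing combinations of ReLU ridges\<close>

lemma relu_pos [simp]: "t \<ge> 0 \<Longrightarrow> relu t = t"
  and relu_neg [simp]: "t \<le> 0 \<Longrightarrow> relu t = 0"
  by (auto simp: relu_def)

lemma relu_eq_if: "relu t = (if t > 0 then t else 0)"
  by (simp add: relu_def)

lemma relu_minus: "relu (- t) = relu t - t"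
  by (simp add: relu_def)

lemma relu_divide_pos: "c > 0 \<Longrightarrow> relu (t / c) = relu t / c"
  by (auto simp: relu_def max_def divide_le_0_iff)

lemma eventually_relu_affine_at_0:
  fixes \<alpha> \<beta> :: real
  assumes "\<alpha> \<noteq> 0"
  shows "\<forall>\<^sub>F t in at 0. relu (\<alpha> + t * \<beta>) = (if \<alpha> > 0 then \<alpha> + t * \<beta> else 0)"
proof -
  have lim: "((\<lambda>t. \<alpha> + t * \<beta>) \<longlongrightarrow> \<alpha>) (at (0::real))"
    by (auto intro!: tendsto_eq_intros)
  show ?thesis
  proof (cases "\<alpha> > 0")
    case True
    show ?thesis
      using order_tendstoD(1)[OF lim True] by eventually_elim (use True in auto)
  next
    case False
    with assms have "\<alpha> < 0" by simp
    show ?thesis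
      using order_tendstoD(2)[OF lim \<open>\<alpha> < 0\<close>] by eventually_elim (use False in auto)
  qed
qed

lemma affine_pair_slope_zero:
  fixes a b A s t :: real
  assumes "a * s + A + b * s = 0" "a * t + A + b * t = 0" "s \<noteq> t"
  shows "a + b = 0"
proof -
  have "(a + b) * (s - t) = (a * s + A + b * s) - (a * t + A + b * t)"
    by (simp add: algebra_simps)
  also have "\<dots> = 0"
    using assms(1,2) by simp
  finally show ?thesis
    using assms(3) by simp
qed

lemma relu_kink_coeffs_cancel:
  fixes cp cm A B d :: real
  assumes "d > 0"
    and "\<And>t. 0 < \<bar>t\<bar> \<Longrightarrow> \<bar>t\<bar> < d \<Longrightarrow> cp * relu t + cm * relu (- t) + A + B * t = 0"
  shows "cp + cm = 0"
proof -
  have "cp * (d/2) + A + B * (d/2) = 0" "cp * (d/4) + A + B * (d/4) = 0"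
    using assms(2)[of "d/2"] assms(2)[of "d/4"] \<open>d > 0\<close> by auto
  then have "cp + B = 0"
    by (rule affine_pair_slope_zero) (use \<open>d > 0\<close> in simp)
  moreover have "cm * (d/2) + A + (- B) * (d/2) = 0" "cm * (d/4) + A + (- B) * (d/4) = 0"
    using assms(2)[of "- d/2"] assms(2)[of "- d/4"] \<open>d > 0\<close> by auto
  then have "cm + - B = 0"
    by (rule affine_pair_slope_zero) (use \<open>d > 0\<close> in simp)
  ultimately show ?thesis by simp
qed

definition same_hyperplane :: "'a::real_vector \<Rightarrow> real \<Rightarrow> 'a \<Rightarrow> real \<Rightarrow> bool" where
  "same_hyperplane v b w \<beta> \<longleftrightarrow> (v, b) = (w, \<beta>) \<or> (v, b) = (- w, - \<beta>)"

lemma same_hyperplane_refl [simp]: "same_hyperplane v b v b"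
  by (simp add: same_hyperplane_def)

lemma same_hyperplane_sym: "same_hyperplane v b w \<beta> \<longleftrightarrow> same_hyperplane w \<beta> v b"
  by (auto simp: same_hyperplane_def)

lemma same_hyperplane_trans:
  "same_hyperplane u a v b \<Longrightarrow> same_hyperplane v b w \<beta> \<Longrightarrow> same_hyperplane u a w \<beta>"
  by (auto simp: same_hyperplane_def)

lemma eventually_off_hyperplanes:
  fixes v :: "'i \<Rightarrow> 'a::real_inner"
  assumes "finite I" "\<forall>i\<in>I. v i \<bullet> p \<noteq> b i"
  shows "\<forall>\<^sub>F t in at (0::real). \<forall>i\<in>I. v i \<bullet> (p + t *\<^sub>R u) \<noteq> b i"
proof (rule eventually_ball_finite[OF assms(1)], rule ballI)
  fix i assume "i \<in> I"
  have "((\<lambda>t. v i \<bullet> (p + t *\<^sub>R u)) \<longlongrightarrow> v i \<bullet> p) (at (0::real))"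
    by (auto intro!: tendsto_eq_intros)
  then show "\<forall>\<^sub>F t in at (0::real). v i \<bullet> (p + t *\<^sub>R u) \<noteq> b i"
    by (rule tendsto_imp_eventually_ne) (use assms(2) \<open>i \<in> I\<close> in auto)
qed

lemma exists_point_on_hyperplane_avoiding:
  fixes v :: "'i \<Rightarrow> 'a::euclidean_space"
  assumes "finite I" "norm w = 1" "\<forall>k\<in>I. norm (v k) = 1"
    and "\<forall>k\<in>I. \<not> same_hyperplane (v k) (b k) w \<beta>"
  shows "\<exists>p. w \<bullet> p = \<beta> \<and> (\<forall>k\<in>I. v k \<bullet> p \<noteq> b k)"
  using assms(1,3,4)
proof (induction I rule: finite_induct)
  case empty
  have "w \<bullet> (\<beta> *\<^sub>R w) = \<beta>"
    using assms(2) by (simp add: norm_eq_1)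
  then show ?case by blast
next
  case (insert k I)
  then obtain p where p: "w \<bullet> p = \<beta>" "\<forall>i\<in>I. v i \<bullet> p \<noteq> b i" by auto
  show ?case
  proof (cases "v k \<bullet> p = b k")
    case False
    then show ?thesis using p by auto
  next
    case True
    txt \<open>Move p inside the hyperplane of w along the component u of v k orthogonal to w; u is
      nonzero since v k is a unit vector different from \<plusminus>w.\<close>
    define u where "u = v k - (v k \<bullet> w) *\<^sub>R w"
    have ww: "w \<bullet> w = 1" using assms(2) by (simp add: norm_eq_1)
    have wu: "w \<bullet> u = 0"
      unfolding u_def using ww by (simp add: inner_diff_right inner_commute)
    have uv: "v k \<bullet> u = u \<bullet> u"
      unfolding u_def using ww by (simp add: inner_commute algebra_simps)
    have "u \<noteq> 0"
    proof
      assume "u = 0"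
      then have vk: "v k = (v k \<bullet> w) *\<^sub>R w" unfolding u_def by simp
      then have "\<bar>v k \<bullet> w\<bar> = 1"
        using assms(2) insert.prems(1) by (metis insertCI norm_scaleR mult.right_neutral)
      then have "v k = w \<and> b k = \<beta> \<or> v k = - w \<and> b k = - \<beta>"
        using vk True p(1) by (cases "v k \<bullet> w \<ge> 0") auto
      then show False using insert.prems(2) by (auto simp: same_hyperplane_def)
    qed
    have "\<forall>\<^sub>F t in at (0::real). \<forall>i\<in>I. v i \<bullet> (p + t *\<^sub>R u) \<noteq> b i"
      by (rule eventually_off_hyperplanes[OF insert(1) p(2)])
    moreover have "\<forall>\<^sub>F t in at (0::real). t \<noteq> 0"
      by (rule eventually_at_filter[THEN iffD2]) simp
    ultimately obtain t where t: "t \<noteq> 0" "\<forall>i\<in>I. v i \<bullet> (p + t *\<^sub>R u) \<noteq> b i"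
      using eventually_happens[OF eventually_conj] trivial_limit_at by blast
    have "v k \<bullet> (p + t *\<^sub>R u) = b k + t * (u \<bullet> u)"
      using True uv by (simp add: inner_add_right)
    then have "v k \<bullet> (p + t *\<^sub>R u) \<noteq> b k"
      using t(1) \<open>u \<noteq> 0\<close> by simp
    moreover have "w \<bullet> (p + t *\<^sub>R u) = \<beta>"
      using p wu by (simp add: inner_add_right)
    ultimately show ?thesis using t by auto
  qed
qed

lemma eventually_relu_along_line:
  fixes v w p :: "'a::real_inner"
  assumes ww: "w \<bullet> w = 1" and p: "w \<bullet> p = \<beta>" and off: "v \<bullet> p = b \<longrightarrow> same_hyperplane v b w \<beta>"
  shows "\<forall>\<^sub>F t in at 0. relu (v \<bullet> (p + t *\<^sub>R w) - b)
    = (if (v, b) = (w, \<beta>) then relu t else 0) + (if (v, b) = (- w, - \<beta>) then relu (- t) else 0)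
      + (if \<not> same_hyperplane v b w \<beta> \<and> v \<bullet> p > b then v \<bullet> p - b + t * (v \<bullet> w) else 0)"
proof (cases "same_hyperplane v b w \<beta>")
  case True
  have "w \<noteq> - w"
    using ww by (metis inner_minus_left one_neq_neg_one)
  with True show ?thesis
    by (auto simp: same_hyperplane_def inner_add_right ww p)
next
  case False
  with off have "v \<bullet> p - b \<noteq> 0"
    by auto
  from eventually_relu_affine_at_0[OF this, of "v \<bullet> w"] show ?thesis
    by eventually_elim (use False in \<open>auto simp: same_hyperplane_def inner_add_right algebra_simps\<close>)
qed

lemma relu_combination_zero_hyperplane_coeffs:
  fixes v :: "'i \<Rightarrow> 'a::euclidean_space"
  assumes fin: "finite I" and unit: "\<forall>k\<in>I. norm (v k) = 1" and w: "norm w = 1"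
    and zero: "\<forall>x. (\<Sum>k\<in>I. c k * relu (v k \<bullet> x - b k)) + q \<bullet> x + c0 = 0"
  shows "(\<Sum>k\<in>{k\<in>I. same_hyperplane (v k) (b k) w \<beta>}. c k) = 0"
proof -
  have ww: "w \<bullet> w = 1"
    using w by (simp add: norm_eq_1)
  have "w \<noteq> - w"
    using ww by (metis inner_minus_left one_neq_neg_one)
  have "\<exists>p. w \<bullet> p = \<beta> \<and> (\<forall>k\<in>{k\<in>I. \<not> same_hyperplane (v k) (b k) w \<beta>}. v k \<bullet> p \<noteq> b k)"
    by (rule exists_point_on_hyperplane_avoiding) (use fin w unit in auto)
  then obtain p where p: "w \<bullet> p = \<beta>"
    and p_off: "\<forall>k\<in>{k\<in>I. \<not> same_hyperplane (v k) (b k) w \<beta>}. v k \<bullet> p \<noteq> b k"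
    by blast
  txt \<open>Along the line p + t w the neurons on the hyperplane of w contribute c k relu(\<plusminus>t) and all
    others are affine near t = 0.\<close>
  define cp where "cp k = (if (v k, b k) = (w, \<beta>) then c k else 0)" for k
  define cm where "cm k = (if (v k, b k) = (- w, - \<beta>) then c k else 0)" for k
  define active where "active k \<longleftrightarrow> \<not> same_hyperplane (v k) (b k) w \<beta> \<and> v k \<bullet> p > b k" for k
  define A where "A k = (if active k then c k * (v k \<bullet> p - b k) else 0)" for k
  define B where "B k = (if active k then c k * (v k \<bullet> w) else 0)" for k
  have "\<forall>\<^sub>F t in at (0::real). \<forall>k\<in>I.
      c k * relu (v k \<bullet> (p + t *\<^sub>R w) - b k) = cp k * relu t + cm k * relu (- t) + A k + B k * t"
  proof (rule eventually_ball_finite[OF fin], rule ballI)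
    fix k assume "k \<in> I"
    then have off: "v k \<bullet> p = b k \<longrightarrow> same_hyperplane (v k) (b k) w \<beta>"
      using p_off by blast
    from eventually_relu_along_line[where v = "v k" and b = "b k", OF ww p off]
    show "\<forall>\<^sub>F t in at 0.
        c k * relu (v k \<bullet> (p + t *\<^sub>R w) - b k) = cp k * relu t + cm k * relu (- t) + A k + B k * t"
      by eventually_elim (auto simp: cp_def cm_def A_def B_def active_def algebra_simps)
  qed
  then obtain d where "d > 0" and d: "\<And>t. t \<noteq> 0 \<Longrightarrow> dist t 0 < d \<Longrightarrow> \<forall>k\<in>I.
      c k * relu (v k \<bullet> (p + t *\<^sub>R w) - b k) = cp k * relu t + cm k * relu (- t) + A k + B k * t"
    unfolding eventually_at by blast
  have "sum cp I + sum cm I = 0"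
  proof (rule relu_kink_coeffs_cancel[OF \<open>d > 0\<close>])
    fix t :: real assume "0 < \<bar>t\<bar>" "\<bar>t\<bar> < d"
    then have "(\<Sum>k\<in>I. c k * relu (v k \<bullet> (p + t *\<^sub>R w) - b k))
        = (\<Sum>k\<in>I. cp k * relu t + cm k * relu (- t) + A k + B k * t)"
      using d[of t] by (intro sum.cong) auto
    also have "\<dots> = sum cp I * relu t + sum cm I * relu (- t) + sum A I + sum B I * t"
      by (simp add: sum.distrib sum_distrib_right)
    finally show "sum cp I * relu t + sum cm I * relu (- t) + (sum A I + q \<bullet> p + c0)
        + (sum B I + q \<bullet> w) * t = 0"
      using zero[rule_format, of "p + t *\<^sub>R w"] by (simp add: inner_add_right algebra_simps)
  qed
  moreover have "(\<Sum>k\<in>{k\<in>I. same_hyperplane (v k) (b k) w \<beta>}. c k) = sum cp I + sum cm I"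
    unfolding sum.inter_filter[OF fin] sum.distrib[symmetric] cp_def cm_def
    using \<open>w \<noteq> - w\<close> by (intro sum.cong) (auto simp: same_hyperplane_def)
  ultimately show ?thesis by simp
qed

section \<open>Representations and the weighted Radon norm\<close>

definition relu_repr ::
  "('a::euclidean_space \<Rightarrow> real) \<Rightarrow> nat \<Rightarrow> (nat \<Rightarrow> real) \<Rightarrow> (nat \<Rightarrow> 'a) \<Rightarrow> (nat \<Rightarrow> real) \<Rightarrow> 'a \<Rightarrow> real \<Rightarrow> bool"
  where "relu_repr f m a v b q c \<longleftrightarrow> (\<forall>i<m. norm (v i) = 1) \<and>
     (\<forall>x. f x = (\<Sum>i<m. a i * relu (v i \<bullet> x - b i)) + q \<bullet> x + c)"

definition skip :: "nat \<Rightarrow> nat \<Rightarrow> nat" where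
  "skip j i = (if i < j then i else Suc i)"

lemma skip_less: "j < m \<Longrightarrow> i < m - 1 \<Longrightarrow> skip j i < m"
  by (auto simp: skip_def)

lemma bij_betw_skip: "j < m \<Longrightarrow> bij_betw (skip j) {..<m - 1} ({..<m} - {j})"
  by (rule bij_betw_byWitness[where f' = "\<lambda>k. if k < j then k else k - 1"]) (auto simp: skip_def)

lemma sum_lessThan_skip:
  assumes "j < m"
  shows "(\<Sum>i<m. F i) = F j + (\<Sum>i<m - 1. F (skip j i))"
  using assms sum.reindex_bij_betw[OF bij_betw_skip[OF assms], of F]
  by (simp add: sum.remove[of "{..<m}" j])

lemma relu_repr_drop_zero:
  assumes "relu_repr f m a v b q c" "j < m" "a j = 0"
  shows "relu_repr f (m - 1) (a \<circ> skip j) (v \<circ> skip j) (b \<circ> skip j) q c"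
  using assms sum_lessThan_skip[OF \<open>j < m\<close>, of "\<lambda>i. a i * relu (v i \<bullet> _ - b i)"]
  by (auto simp: relu_repr_def skip_less)

lemma relu_repr_merge:
  assumes rep: "relu_repr f m a v b q c" and "i < m" "j < m" "i \<noteq> j"
    and same: "same_hyperplane (v j) (b j) (v i) (b i)"
  shows "\<exists>a' q' c'. relu_repr f (m - 1) a' (v \<circ> skip j) (b \<circ> skip j) q' c'"
proof -
  txt \<open>Neuron j is merged into neuron i: if the two are opposite, relu(-s) = relu s - s moves the
    difference into the affine part.\<close>
  define a' where "a' = a(i := a i + a j)"
  define s where "s = (if (v j, b j) = (v i, b i) then 0 else 1::real)"
  have neuron_j: "a j * relu (v j \<bullet> x - b j)
      = a j * relu (v i \<bullet> x - b i) - s * a j * (v i \<bullet> x - b i)" for x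
  proof (cases "(v j, b j) = (v i, b i)")
    case False
    with same have "v j = - v i" "b j = - b i"
      by (auto simp: same_hyperplane_def)
    then have flip: "relu (v j \<bullet> x - b j) = relu (v i \<bullet> x - b i) - (v i \<bullet> x - b i)"
      using relu_minus[of "v i \<bullet> x - b i"] by simp
    have "s = 1"
      using False by (simp add: s_def)
    then show ?thesis
      unfolding flip by (simp add: algebra_simps)
  qed (simp add: s_def)
  have "relu_repr f (m - 1) (a' \<circ> skip j) (v \<circ> skip j) (b \<circ> skip j)
      (q - (s * a j) *\<^sub>R v i) (c + s * a j * b i)"
    unfolding relu_repr_def
  proof (intro conjI allI impI)
    fix k assume "k < m - 1"
    then show "norm ((v \<circ> skip j) k) = 1"
      using rep skip_less[OF \<open>j < m\<close>] by (auto simp: relu_repr_def)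
  next
    fix x
    have "(\<Sum>k<m. a' k * relu (v k \<bullet> x - b k))
        = (\<Sum>k<m. a k * relu (v k \<bullet> x - b k)) + a j * relu (v i \<bullet> x - b i)"
    proof -
      have "(\<Sum>k<m. a' k * relu (v k \<bullet> x - b k))
          = (\<Sum>k<m. a k * relu (v k \<bullet> x - b k) + (if k = i then a j * relu (v i \<bullet> x - b i) else 0))"
        by (rule sum.cong) (auto simp: a'_def algebra_simps)
      then show ?thesis
        using \<open>i < m\<close> by (simp add: sum.distrib)
    qed
    moreover have "(\<Sum>k<m. a' k * relu (v k \<bullet> x - b k))
        = a j * relu (v j \<bullet> x - b j) + (\<Sum>k<m - 1. a' (skip j k) * relu (v (skip j k) \<bullet> x - b (skip j k)))"
      using sum_lessThan_skip[OF \<open>j < m\<close>, of "\<lambda>k. a' k * relu (v k \<bullet> x - b k)"] \<open>i \<noteq> j\<close>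
      by (simp add: a'_def)
    ultimately show "f x = (\<Sum>k<m - 1. (a' \<circ> skip j) k * relu ((v \<circ> skip j) k \<bullet> x - (b \<circ> skip j) k))
        + (q - (s * a j) *\<^sub>R v i) \<bullet> x + (c + s * a j * b i)"
      using rep neuron_j[of x] by (simp add: relu_repr_def inner_diff_left algebra_simps)
  qed
  then show ?thesis by blast
qed

lemma relu_repr_imp_canon_repr:
  "relu_repr f m a v b q c \<Longrightarrow> \<exists>m a v b q c. canon_repr f m a v b q c"
proof (induction m arbitrary: a v b q c rule: less_induct)
  case (less m)
  show ?case
  proof (cases "canon_repr f m a v b q c")
    case False
    then consider j where "j < m" "a j = 0"
      | i j where "i < m" "j < m" "i \<noteq> j" "same_hyperplane (v j) (b j) (v i) (b i)"
      using less.prems unfolding canon_repr_def relu_repr_def same_hyperplane_def by blast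
    then show ?thesis
    proof cases
      case 1
      then show ?thesis
        using less.IH[OF _ relu_repr_drop_zero[OF less.prems]] by simp
    next
      case 2
      then obtain a' q' c' where "relu_repr f (m - 1) a' (v \<circ> skip j) (b \<circ> skip j) q' c'"
        using relu_repr_merge[OF less.prems] by blast
      moreover have "m - 1 < m"
        using \<open>j < m\<close> by simp
      ultimately show ?thesis
        using less.IH by blast
    qed
  qed blast
qed

lemma canon_repr_same_hyperplane_eq:
  assumes "canon_repr f m a v b q c" "i < m" "j < m" "same_hyperplane (v i) (b i) (v j) (b j)"
  shows "i = j"
  using assms unfolding canon_repr_def same_hyperplane_def by auto

lemma canon_repr_coeff:
  assumes can: "canon_repr f m' a' v' b' q' c'" and rep: "relu_repr f m a v b q c" and "k < m'"
  shows "a' k = (\<Sum>i<m. if same_hyperplane (v i) (b i) (v' k) (b' k) then a i else 0)"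
proof -
  txt \<open>The difference of the two representations vanishes identically; collect the coefficients
    on the hyperplane of neuron k of the canonical one.\<close>
  define C where "C = case_sum a' (\<lambda>i. - a i)"
  define V where "V = case_sum v' v"
  define \<beta> where "\<beta> = case_sum b' b"
  define I where "I = {..<m'} <+> {..<m}"
  have "(\<Sum>\<kappa>\<in>{\<kappa>\<in>I. same_hyperplane (V \<kappa>) (\<beta> \<kappa>) (v' k) (b' k)}. C \<kappa>) = 0"
  proof (rule relu_combination_zero_hyperplane_coeffs)
    show "finite I" "\<forall>\<kappa>\<in>I. norm (V \<kappa>) = 1" "norm (v' k) = 1"
      using can rep \<open>k < m'\<close> by (auto simp: I_def V_def canon_repr_def relu_repr_def)
    show "\<forall>x. (\<Sum>\<kappa>\<in>I. C \<kappa> * relu (V \<kappa> \<bullet> x - \<beta> \<kappa>)) + (q' - q) \<bullet> x + (c' - c) = 0"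
    proof
      fix x
      have "f x = (\<Sum>i<m'. a' i * relu (v' i \<bullet> x - b' i)) + q' \<bullet> x + c'"
        "f x = (\<Sum>i<m. a i * relu (v i \<bullet> x - b i)) + q \<bullet> x + c"
        using can rep by (auto simp: canon_repr_def relu_repr_def)
      then show "(\<Sum>\<kappa>\<in>I. C \<kappa> * relu (V \<kappa> \<bullet> x - \<beta> \<kappa>)) + (q' - q) \<bullet> x + (c' - c) = 0"
        by (simp add: I_def C_def V_def \<beta>_def sum.Plus sum_negf inner_diff_left)
    qed
  qed
  moreover have "(\<Sum>i<m'. if same_hyperplane (v' i) (b' i) (v' k) (b' k) then a' i else 0) = a' k"
  proof -
    have "(\<Sum>i<m'. if same_hyperplane (v' i) (b' i) (v' k) (b' k) then a' i else 0)
        = (\<Sum>i<m'. if i = k then a' i else 0)"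
      using canon_repr_same_hyperplane_eq[OF can _ \<open>k < m'\<close>] by (intro sum.cong) auto
    then show ?thesis
      using \<open>k < m'\<close> by simp
  qed
  moreover have "(\<Sum>i<m. if same_hyperplane (v i) (b i) (v' k) (b' k) then - a i else 0)
      = - (\<Sum>i<m. if same_hyperplane (v i) (b i) (v' k) (b' k) then a i else 0)"
    unfolding sum_negf[symmetric] by (intro sum.cong) auto
  ultimately show ?thesis
    by (simp add: sum.inter_filter I_def C_def V_def \<beta>_def sum.Plus cong: if_cong)
qed

lemma sum_if_unique_le:
  fixes X :: real
  assumes "finite A" "X \<ge> 0" "\<And>k k'. k \<in> A \<Longrightarrow> k' \<in> A \<Longrightarrow> P k \<Longrightarrow> P k' \<Longrightarrow> k = k'"
  shows "(\<Sum>k\<in>A. if P k then X else 0) \<le> X"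
proof -
  have "card {k\<in>A. P k} \<le> 1"
    using assms(1,3) by (simp add: card_le_Suc0_iff_eq)
  then have "real (card {k\<in>A. P k}) * X \<le> X"
    using assms(2) by (simp add: mult_left_le_one_le)
  then show ?thesis
    using assms(1) by (simp add: sum.inter_filter[symmetric])
qed

lemma radon_norm_le_relu_repr:
  assumes rep: "relu_repr f m a v b q c"
    and g_nonneg: "\<And>w \<beta>. g w \<beta> \<ge> 0" and g_even: "\<And>w \<beta>. g (- w) (- \<beta>) = g w \<beta>"
  shows "radon_norm g f \<le> (\<Sum>i<m. \<bar>a i\<bar> * g (v i) (b i))"
proof -
  have "\<exists>r m a v b q c. canon_repr f m a v b q c \<and> r = (\<Sum>i<m. \<bar>a i\<bar> * g (v i) (b i))"
    using relu_repr_imp_canon_repr[OF rep] by blast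
  from someI_ex[OF this] obtain m' a' v' b' q' c' where can: "canon_repr f m' a' v' b' q' c'"
    and norm_eq: "radon_norm g f = (\<Sum>k<m'. \<bar>a' k\<bar> * g (v' k) (b' k))"
    unfolding radon_norm_def by blast
  define same where "same k i \<longleftrightarrow> same_hyperplane (v i) (b i) (v' k) (b' k)" for k i
  have g_same: "g (v' k) (b' k) = g (v i) (b i)" if "same k i" for k i
    using that g_even by (auto simp: same_def same_hyperplane_def)
  have "radon_norm g f \<le> (\<Sum>k<m'. \<Sum>i<m. if same k i then \<bar>a i\<bar> * g (v i) (b i) else 0)"
    unfolding norm_eq
  proof (rule sum_mono)
    fix k assume "k \<in> {..<m'}"
    then have "\<bar>a' k\<bar> \<le> (\<Sum>i<m. \<bar>if same k i then a i else 0\<bar>)"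
      using canon_repr_coeff[OF can rep] by (simp add: same_def sum_abs)
    also have "\<dots> = (\<Sum>i<m. if same k i then \<bar>a i\<bar> else 0)"
      by (intro sum.cong) auto
    finally have "\<bar>a' k\<bar> * g (v' k) (b' k) \<le> (\<Sum>i<m. if same k i then \<bar>a i\<bar> else 0) * g (v' k) (b' k)"
      by (rule mult_right_mono) (rule g_nonneg)
    also have "\<dots> = (\<Sum>i<m. if same k i then \<bar>a i\<bar> * g (v i) (b i) else 0)"
      unfolding sum_distrib_right using g_same by (intro sum.cong) auto
    finally show "\<bar>a' k\<bar> * g (v' k) (b' k) \<le> (\<Sum>i<m. if same k i then \<bar>a i\<bar> * g (v i) (b i) else 0)" .
  qed
  also have "\<dots> = (\<Sum>i<m. \<Sum>k<m'. if same k i then \<bar>a i\<bar> * g (v i) (b i) else 0)"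
    by (rule sum.swap)
  also have "\<dots> \<le> (\<Sum>i<m. \<bar>a i\<bar> * g (v i) (b i))"
  proof (rule sum_mono, rule sum_if_unique_le)
    fix i k k' assume "k \<in> {..<m'}" "k' \<in> {..<m'}" "same k i" "same k' i"
    then have "same_hyperplane (v' k) (b' k) (v' k') (b' k')"
      unfolding same_def by (metis same_hyperplane_sym same_hyperplane_trans)
    then show "k = k'"
      using canon_repr_same_hyperplane_eq[OF can] \<open>k \<in> {..<m'}\<close> \<open>k' \<in> {..<m'}\<close> by blast
  qed (simp_all add: g_nonneg)
  finally show ?thesis .
qed

lemma g_tilde_nonneg: "g_tilde xs n v b \<ge> 0"
  unfolding g_tilde_def Let_def
  by (auto intro!: mult_nonneg_nonneg divide_nonneg_nonneg sum_nonneg)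

lemma g_weight_nonneg: "g_weight xs n v b \<ge> 0"
  by (simp add: g_weight_def g_tilde_nonneg)

lemma g_weight_uminus: "g_weight xs n (- v) (- b) = g_weight xs n v b"
  by (simp add: g_weight_def min.commute)

lemma g_weight_le_g_tilde: "g_weight xs n v b \<le> g_tilde xs n v b"
  by (simp add: g_weight_def)

lemma radon_norm_net_le:
  fixes W1 :: "'a::euclidean_space ^ 'k::finite"
  assumes g_nonneg: "\<And>w \<beta>. g w \<beta> \<ge> 0" and g_even: "\<And>w \<beta>. g (- w) (- \<beta>) = g w \<beta>"
  shows "radon_norm g (net (W1, b1, w2, b2)) \<le> (\<Sum>i\<in>UNIV. if W1 $ i = 0 then 0 else
      \<bar>w2 $ i\<bar> * norm (W1 $ i) * g (W1 $ i /\<^sub>R norm (W1 $ i)) (- b1 $ i / norm (W1 $ i)))"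
proof -
  obtain e where e: "bij_betw e {..<CARD('k)} (UNIV :: 'k set)"
    using ex_bij_betw_nat_finite[of "UNIV :: 'k set"] by (auto simp: atLeast0LessThan)
  obtain u :: 'a where "norm u = 1"
    using norm_Basis nonempty_Basis by blast
  txt \<open>Neurons with zero weight vector are constant; they get coefficient 0 and an arbitrary unit
    normal u, and their value relu (b1 i) is moved into the constant term.\<close>
  define v where "v i = (if W1 $ i = 0 then u else W1 $ i /\<^sub>R norm (W1 $ i))" for i
  define \<beta> where "\<beta> i = - b1 $ i / norm (W1 $ i)" for i
  define c where "c = b2 + (\<Sum>i\<in>UNIV. if W1 $ i = 0 then w2 $ i * relu (b1 $ i) else 0)"
  have neuron: "w2 $ i * relu (x \<bullet> W1 $ i + b1 $ i)
      = w2 $ i * norm (W1 $ i) * relu (v i \<bullet> x - \<beta> i) + (if W1 $ i = 0 then w2 $ i * relu (b1 $ i) else 0)"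
    for i x
  proof (cases "W1 $ i = 0")
    case False
    then have "v i \<bullet> x - \<beta> i = (x \<bullet> W1 $ i + b1 $ i) / norm (W1 $ i)"
      by (simp add: v_def \<beta>_def inner_commute field_simps)
    with False show ?thesis
      by (simp add: relu_divide_pos)
  qed simp
  have "relu_repr (net (W1, b1, w2, b2)) CARD('k)
      (\<lambda>k. w2 $ e k * norm (W1 $ e k)) (v \<circ> e) (\<beta> \<circ> e) 0 c"
    unfolding relu_repr_def
  proof (intro conjI allI impI)
    fix x
    show "net (W1, b1, w2, b2) x
        = (\<Sum>k<CARD('k). w2 $ e k * norm (W1 $ e k) * relu ((v \<circ> e) k \<bullet> x - (\<beta> \<circ> e) k)) + 0 \<bullet> x + c"
      using sum.reindex_bij_betw[OF e, of "\<lambda>i. w2 $ i * norm (W1 $ i) * relu (v i \<bullet> x - \<beta> i)"]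
      by (simp add: net_def neuron c_def sum.distrib)
  qed (simp add: v_def \<open>norm u = 1\<close>)
  then have "radon_norm g (net (W1, b1, w2, b2))
      \<le> (\<Sum>k<CARD('k). \<bar>w2 $ e k * norm (W1 $ e k)\<bar> * g ((v \<circ> e) k) ((\<beta> \<circ> e) k))"
    by (rule radon_norm_le_relu_repr[where g = g, OF _ g_nonneg g_even])
  also have "\<dots> = (\<Sum>i\<in>UNIV. \<bar>w2 $ i * norm (W1 $ i)\<bar> * g (v i) (\<beta> i))"
    using sum.reindex_bij_betw[OF e, of "\<lambda>i. \<bar>w2 $ i * norm (W1 $ i)\<bar> * g (v i) (\<beta> i)"] by simp
  also have "\<dots> = (\<Sum>i\<in>UNIV. if W1 $ i = 0 then 0 else
      \<bar>w2 $ i\<bar> * norm (W1 $ i) * g (W1 $ i /\<^sub>R norm (W1 $ i)) (- b1 $ i / norm (W1 $ i)))"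
    by (intro sum.cong) (auto simp: v_def \<beta>_def abs_mult)
  finally show ?thesis .
qed

lemma mult_sqrt_norm_scaleR_inverse:
  fixes s :: "'a::real_normed_vector" and m N :: real
  assumes "m > 0" "N > 0"
  shows "(m / N) * sqrt ((norm ((1 / m) *\<^sub>R s))^2 + 1) = sqrt ((norm ((1 / N) *\<^sub>R s))^2 + (m / N)^2)"
proof -
  define X where "X = (norm s)^2 + m^2"
  have "(norm ((1 / m) *\<^sub>R s))^2 + 1 = X / m^2" "(norm ((1 / N) *\<^sub>R s))^2 + (m / N)^2 = X / N^2"
    using assms by (simp_all add: X_def power_divide field_simps)
  then show ?thesis
    using assms by (simp add: real_sqrt_divide)
qed

lemma norm_mult_g_tilde:
  fixes W :: "'a::euclidean_space" and xs :: "nat \<Rightarrow> 'a" and \<beta> :: real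
  assumes "W \<noteq> 0" and "n \<ge> 1"
  defines "A \<equiv> {j. j < n \<and> xs j \<bullet> W + \<beta> > 0}"
  shows "norm W * g_tilde xs n (W /\<^sub>R norm W) (- \<beta> / norm W) =
     ((\<Sum>j\<in>A. xs j \<bullet> W + \<beta>) / n) * sqrt ((norm ((1 / real n) *\<^sub>R (\<Sum>j\<in>A. xs j)))^2 + (card A / n)^2)"
proof -
  have nW: "norm W > 0"
    using assms(1) by simp
  have active: "{j. j < n \<and> xs j \<bullet> (W /\<^sub>R norm W) > - \<beta> / norm W} = A"
    using nW by (auto simp: A_def inner_commute field_simps)
  show ?thesis
  proof (cases "A = {}")
    case True
    then show ?thesis
      unfolding g_tilde_def Let_def active by simp
  next
    case False
    define s where "s = (\<Sum>j\<in>A. xs j)"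
    define m where "m = real (card A)"
    have "m > 0"
      using False by (simp add: m_def A_def card_gt_0_iff)
    have "real n > 0"
      using \<open>n \<ge> 1\<close> by simp
    have sum_shift: "(\<Sum>j\<in>A. xs j \<bullet> (W /\<^sub>R norm W) - - \<beta> / norm W) = (\<Sum>j\<in>A. xs j \<bullet> W + \<beta>) / norm W"
      unfolding sum_divide_distrib using nW by (intro sum.cong) (auto simp: inner_commute field_simps)
    have "g_tilde xs n (W /\<^sub>R norm W) (- \<beta> / norm W)
        = (m / n)^2 * (((\<Sum>j\<in>A. xs j \<bullet> W + \<beta>) / norm W) / m) * sqrt ((norm ((1 / m) *\<^sub>R s))^2 + 1)"
      unfolding g_tilde_def Let_def active using False sum_shift by (simp add: m_def s_def)
    then have "norm W * g_tilde xs n (W /\<^sub>R norm W) (- \<beta> / norm W)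
        = ((\<Sum>j\<in>A. xs j \<bullet> W + \<beta>) / n) * ((m / n) * sqrt ((norm ((1 / m) *\<^sub>R s))^2 + 1))"
      using nW \<open>m > 0\<close> \<open>real n > 0\<close> by (simp add: field_simps power2_eq_square)
    also have "\<dots> = ((\<Sum>j\<in>A. xs j \<bullet> W + \<beta>) / n) * sqrt ((norm ((1 / real n) *\<^sub>R s))^2 + (m / n)^2)"
      by (simp only: mult_sqrt_norm_scaleR_inverse[OF \<open>m > 0\<close> \<open>real n > 0\<close>])
    finally show ?thesis
      by (simp add: s_def m_def)
  qed
qed

section \<open>The sample loss near an interpolating minimum\<close>

definition preact :: "'a::euclidean_space \<Rightarrow> ('a, 'k::finite) params \<Rightarrow> 'k \<Rightarrow> real" where
  "preact x \<theta> i = x \<bullet> fst \<theta> $ i + fst (snd \<theta>) $ i"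

text \<open>The gradient of \<theta> \<mapsto> net \<theta> x, valid wherever no pre-activation vanishes.\<close>

definition net_grad :: "'a::euclidean_space \<Rightarrow> ('a, 'k::finite) params \<Rightarrow> ('a, 'k) params" where
  "net_grad x \<theta> =
     ((\<chi> i. if preact x \<theta> i > 0 then fst (snd (snd \<theta>)) $ i *\<^sub>R x else 0),
      (\<chi> i. if preact x \<theta> i > 0 then fst (snd (snd \<theta>)) $ i else 0),
      (\<chi> i. relu (preact x \<theta> i)), 1)"

lemma net_eq_preact:
  "net \<theta> x = (\<Sum>i\<in>UNIV. fst (snd (snd \<theta>)) $ i * relu (preact x \<theta> i)) + snd (snd (snd \<theta>))"
  by (cases \<theta>) (simp add: net_def preact_def)

definition active_net :: "'k set \<Rightarrow> 'a::euclidean_space \<Rightarrow> ('a, 'k::finite) params \<Rightarrow> real" where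
  "active_net S x \<theta> = (\<Sum>i\<in>S. fst (snd (snd \<theta>)) $ i * preact x \<theta> i) + snd (snd (snd \<theta>))"

definition active_net_deriv ::
  "'k set \<Rightarrow> 'a::euclidean_space \<Rightarrow> ('a, 'k::finite) params \<Rightarrow> ('a, 'k) params \<Rightarrow> real" where
  "active_net_deriv S x \<theta> h = (\<Sum>i\<in>S. fst (snd (snd h)) $ i * preact x \<theta> i
      + fst (snd (snd \<theta>)) $ i * preact x h i) + snd (snd (snd h))"

lemma inner_net_grad: "net_grad x \<theta> \<bullet> h = active_net_deriv {i. preact x \<theta> i > 0} x \<theta> h"
proof -
  have scale_if: "(if P then c *\<^sub>R x else 0) = (if P then c else 0) *\<^sub>R x" for P and c :: real
    by simp
  have "net_grad x \<theta> \<bullet> h = (\<Sum>i\<in>UNIV. (if preact x \<theta> i > 0 then fst (snd (snd \<theta>)) $ i else 0)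
      * preact x h i + relu (preact x \<theta> i) * fst (snd (snd h)) $ i) + snd (snd (snd h))"
    by (simp add: net_grad_def scale_if inner_prod_def inner_vec_def preact_def sum.distrib
        algebra_simps inner_commute)
  also have "\<dots> = (\<Sum>i\<in>UNIV. if preact x \<theta> i > 0 then fst (snd (snd h)) $ i * preact x \<theta> i
      + fst (snd (snd \<theta>)) $ i * preact x h i else 0) + snd (snd (snd h))"
    by (intro arg_cong2[where f = "(+)"] sum.cong) (auto simp: relu_def)
  finally show ?thesis
    by (simp add: active_net_deriv_def sum.If_cases)
qed

lemma sq_relu_not_differentiable:
  fixes s w :: real
  assumes "s * w \<noteq> 0"
  shows "\<not> (\<lambda>t. (s + w * relu t)^2 / 2) differentiable (at 0)"
proof
  define Q where "Q t = ((s + w * relu t)^2 / 2 - (s + w * relu 0)^2 / 2) / (t - 0)" for t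
  assume "(\<lambda>t. (s + w * relu t)^2 / 2) differentiable (at 0)"
  then obtain D where "((\<lambda>t. (s + w * relu t)^2 / 2) has_real_derivative D) (at 0)"
    by (auto simp: real_differentiable_def)
  then have lim_left: "(Q \<longlongrightarrow> D) (at_left 0)" and lim_right: "(Q \<longlongrightarrow> D) (at_right 0)"
    unfolding has_field_derivative_iff Q_def filterlim_at_split by auto
  have "\<forall>\<^sub>F t in at_left (0::real). t \<in> {-1<..<0}"
    by (rule eventually_at_left_real) simp
  then have "\<forall>\<^sub>F t in at_left (0::real). Q t = 0"
    by eventually_elim (auto simp: Q_def)
  then have "(Q \<longlongrightarrow> 0) (at_left 0)"
    by (rule tendsto_eventually)
  with lim_left have "D = 0"
    by (intro tendsto_unique) auto
  have "\<forall>\<^sub>F t in at_right (0::real). t \<in> {0<..<1}"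
    by (rule eventually_at_right_real) simp
  then have "\<forall>\<^sub>F t in at_right (0::real). Q t = s * w + w^2 * t / 2"
    by eventually_elim (auto simp: Q_def field_simps power2_eq_square)
  moreover have "((\<lambda>t. s * w + w^2 * t / 2) \<longlongrightarrow> s * w) (at_right (0::real))"
    by (auto intro!: tendsto_eq_intros)
  ultimately have "(Q \<longlongrightarrow> s * w) (at_right 0)"
    by (simp add: tendsto_cong)
  with lim_right have "D = s * w"
    by (intro tendsto_unique) auto
  with \<open>D = 0\<close> assms show False by simp
qed

lemma net_perturb_at_kink:
  fixes W1 :: "'a::euclidean_space ^ 'k::finite"
  assumes "preact x (W1, b1, w2, b2) i = 0"
  shows "net (W1, b1 + t *\<^sub>R axis i 1, w2 + s *\<^sub>R axis i 1, b2 + s) x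
      = net (W1, b1, w2, b2) x + s + (w2 $ i + s) * relu t"
  using assms by (simp add: net_eq_preact preact_def axis_def sum.remove[of UNIV i] algebra_simps)

lemma preact_nonzero_if_loss_differentiable:
  fixes \<theta> :: "('a::euclidean_space, 'k::finite) params"
  assumes "e > 0"
    and diff: "\<And>\<theta>'. \<theta>' \<in> ball \<theta> e \<Longrightarrow> (\<lambda>\<theta>. (net \<theta> x - y)^2 / 2) differentiable (at \<theta>')"
    and interp: "net \<theta> x = y"
  shows "preact x \<theta> i \<noteq> 0"
proof
  assume kink: "preact x \<theta> i = 0"
  obtain W1 b1 w2 b2 where \<theta>: "\<theta> = (W1, b1, w2, b2)"
    by (cases \<theta>) auto
  txt \<open>Shifting the outer weight of neuron i and the output bias by a small s \<noteq> 0 makes both the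
    residual and the outer weight nonzero; along the inner bias of neuron i the loss is then
    (s + w relu t)^2 / 2, which has a kink at t = 0.\<close>
  define s where "s = (if w2 $ i + e/4 \<noteq> 0 then e/4 else - e/4)"
  have "s \<noteq> 0" "w2 $ i + s \<noteq> 0" "\<bar>s\<bar> = e/4"
    using \<open>e > 0\<close> by (auto simp: s_def)
  define \<theta>' where "\<theta>' = (W1, b1, w2 + s *\<^sub>R axis i 1, b2 + s)"
  define E :: "('a, 'k) params" where "E = (0, axis i 1, 0, 0)"
  have "dist \<theta>' \<theta> = norm (s *\<^sub>R axis i (1::real), s)"
    by (simp add: \<theta>'_def \<theta> dist_norm)
  also have "\<dots> \<le> norm (s *\<^sub>R axis i (1::real)) + norm s"
    by (rule norm_Pair_le)
  also have "\<dots> < e"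
    using \<open>\<bar>s\<bar> = e/4\<close> \<open>e > 0\<close> by simp
  finally have "(\<lambda>\<theta>. (net \<theta> x - y)^2 / 2) differentiable (at ((\<lambda>t. \<theta>' + t *\<^sub>R E) 0))"
    using diff by (simp add: dist_commute)
  moreover have "(\<lambda>t. \<theta>' + t *\<^sub>R E) differentiable (at 0)"
    by (intro derivative_intros)
  ultimately have "(\<lambda>t. (net (\<theta>' + t *\<^sub>R E) x - y)^2 / 2) differentiable (at 0)"
    by (rule differentiable_compose)
  moreover have "net (\<theta>' + t *\<^sub>R E) x - y = s + (w2 $ i + s) * relu t" for t
    using net_perturb_at_kink[of x W1 b1 w2 b2 i t s] kink interp
    by (simp add: \<theta>'_def E_def \<theta>)
  ultimately have "(\<lambda>t. (s + (w2 $ i + s) * relu t)^2 / 2) differentiable (at 0)"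
    by simp
  with sq_relu_not_differentiable \<open>s \<noteq> 0\<close> \<open>w2 $ i + s \<noteq> 0\<close> show False
    by simp
qed

lemma preact_nonzero_if_twice_diff_at:
  fixes \<theta> :: "('a::euclidean_space, 'k::finite) params"
  assumes "twice_diff_at (\<lambda>\<theta>. (net \<theta> x - y)^2 / 2) \<theta> G H" and "net \<theta> x = y"
  shows "preact x \<theta> i \<noteq> 0"
proof -
  obtain e where "e > 0"
    and "\<And>\<theta>'. \<theta>' \<in> ball \<theta> e \<Longrightarrow> ((\<lambda>\<theta>. (net \<theta> x - y)^2 / 2) has_derivative (\<lambda>h. G \<theta>' \<bullet> h)) (at \<theta>')"
    using assms(1) unfolding twice_diff_at_def by blast
  then show ?thesis
    using preact_nonzero_if_loss_differentiable[OF \<open>e > 0\<close> _ assms(2)]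
    unfolding differentiable_def by blast
qed

lemma has_derivative_vec_nth [derivative_intros]:
  "(f has_derivative f') F \<Longrightarrow> ((\<lambda>x. f x $ i) has_derivative (\<lambda>h. f' h $ i)) F"
  by (rule bounded_linear.has_derivative[OF bounded_linear_vec_nth])

lemma has_derivative_active_net: "(active_net S x has_derivative active_net_deriv S x \<theta>) (at \<theta>)"
  unfolding active_net_def active_net_deriv_def preact_def
  by (auto intro!: derivative_eq_intros simp: algebra_simps sum.distrib)

lemma differentiable_active_net_deriv: "(\<lambda>\<theta>. active_net_deriv S x \<theta> h) differentiable (at \<theta>)"
proof -
  have "((\<lambda>\<theta>. active_net_deriv S x \<theta> h) has_derivative (\<lambda>k. \<Sum>i\<in>S. fst (snd (snd h)) $ i * preact x k i
      + fst (snd (snd k)) $ i * preact x h i)) (at \<theta>)"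
    unfolding active_net_deriv_def preact_def
    by (auto intro!: derivative_eq_intros simp: algebra_simps sum.distrib)
  then show ?thesis
    unfolding differentiable_def by blast
qed

lemma eventually_net_eq_active_net:
  fixes \<theta> :: "('a::euclidean_space, 'k::finite) params"
  assumes "\<And>i. preact x \<theta> i \<noteq> 0"
  shows "\<forall>\<^sub>F \<theta>' in nhds \<theta>. net \<theta>' x = active_net {i. preact x \<theta> i > 0} x \<theta>'"
proof -
  have "\<forall>\<^sub>F \<theta>' in nhds \<theta>. \<forall>i. preact x \<theta>' i > 0 \<longleftrightarrow> preact x \<theta> i > 0"
  proof (rule eventually_all_finite)
    fix i
    have lim: "((\<lambda>\<theta>'. preact x \<theta>' i) \<longlongrightarrow> preact x \<theta> i) (nhds \<theta>)"
      unfolding preact_def by (intro tendsto_intros filterlim_ident)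
    show "\<forall>\<^sub>F \<theta>' in nhds \<theta>. preact x \<theta>' i > 0 \<longleftrightarrow> preact x \<theta> i > 0"
    proof (cases "preact x \<theta> i > 0")
      case True
      from order_tendstoD(1)[OF lim this] show ?thesis
        by eventually_elim (use True in auto)
    next
      case False
      with assms have "preact x \<theta> i < 0"
        by (meson linorder_neqE_linordered_idom)
      from order_tendstoD(2)[OF lim this] show ?thesis
        by eventually_elim (use False in auto)
    qed
  qed
  then show ?thesis
  proof eventually_elim
    case (elim \<theta>')
    then have "fst (snd (snd \<theta>')) $ i * relu (preact x \<theta>' i)
        = (if preact x \<theta> i > 0 then fst (snd (snd \<theta>')) $ i * preact x \<theta>' i else 0)" for i
      by (auto simp: relu_def)
    then show ?case
      by (simp add: net_eq_preact active_net_def sum.If_cases)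
  qed
qed

lemma interpolating_loss_gradient_hessian:
  fixes \<theta> :: "('a::euclidean_space, 'k::finite) params"
  assumes twice: "twice_diff_at (\<lambda>\<theta>. (net \<theta> x - y)^2 / 2) \<theta> G H"
    and interp: "net \<theta> x = y"
  shows "G \<theta> = 0" and "H k \<bullet> h = (net_grad x \<theta> \<bullet> k) * (net_grad x \<theta> \<bullet> h)"
proof -
  obtain e where "e > 0"
    and dl: "\<And>\<theta>'. \<theta>' \<in> ball \<theta> e \<Longrightarrow> ((\<lambda>\<theta>. (net \<theta> x - y)^2 / 2) has_derivative (\<lambda>h. G \<theta>' \<bullet> h)) (at \<theta>')"
    and dG: "(G has_derivative H) (at \<theta>)"
    using twice unfolding twice_diff_at_def by blast
  define S where "S = {i. preact x \<theta> i > 0}"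
  define P where "P = active_net S x"
  define dP where "dP = active_net_deriv S x"
  obtain U where "open U" "\<theta> \<in> U" and U: "\<And>\<theta>'. \<theta>' \<in> U \<Longrightarrow> net \<theta>' x = P \<theta>'"
    using eventually_net_eq_active_net[OF preact_nonzero_if_twice_diff_at[OF twice interp]]
    unfolding eventually_nhds P_def S_def by blast
  define V where "V = U \<inter> ball \<theta> e"
  have "open V" "\<theta> \<in> V"
    using \<open>open U\<close> \<open>\<theta> \<in> U\<close> \<open>e > 0\<close> by (auto simp: V_def)
  have G_eq: "G \<theta>' \<bullet> h = (P \<theta>' - y) * dP \<theta>' h" if "\<theta>' \<in> V" for \<theta>' h
  proof -
    have "((\<lambda>\<theta>. (P \<theta> - y)^2 / 2) has_derivative (\<lambda>h. (P \<theta>' - y) * dP \<theta>' h)) (at \<theta>')"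
      unfolding P_def dP_def by (auto intro!: derivative_eq_intros has_derivative_active_net
          simp: power2_eq_square)
    then have "((\<lambda>\<theta>. (net \<theta> x - y)^2 / 2) has_derivative (\<lambda>h. (P \<theta>' - y) * dP \<theta>' h)) (at \<theta>')"
      by (rule has_derivative_transform_within_open[OF _ \<open>open V\<close> that]) (simp add: U V_def)
    with dl[of \<theta>'] that have "(\<lambda>h. G \<theta>' \<bullet> h) = (\<lambda>h. (P \<theta>' - y) * dP \<theta>' h)"
      by (auto simp: V_def intro: has_derivative_unique)
    then show ?thesis by metis
  qed
  have "P \<theta> = y"
    using U \<open>\<theta> \<in> U\<close> interp by simp
  then show "G \<theta> = 0"
    using G_eq[OF \<open>\<theta> \<in> V\<close>, of "G \<theta>"] by simp
  txt \<open>Differentiating G \<theta>' \<bullet> h = (P \<theta>' - y) dP \<theta>' h at \<theta>, where the residual P \<theta> - y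
    vanishes, leaves only the Gauss-Newton term.\<close>
  obtain D where D: "((\<lambda>\<theta>'. dP \<theta>' h) has_derivative D) (at \<theta>)"
    using differentiable_active_net_deriv unfolding dP_def differentiable_def by blast
  have "(P has_derivative dP \<theta>) (at \<theta>)"
    unfolding P_def dP_def by (rule has_derivative_active_net)
  from has_derivative_mult[OF has_derivative_diff[OF this has_derivative_const[of y]] D]
  have "((\<lambda>\<theta>'. (P \<theta>' - y) * dP \<theta>' h) has_derivative (\<lambda>k. dP \<theta> k * dP \<theta> h)) (at \<theta>)"
    using \<open>P \<theta> = y\<close> by simp
  moreover have "((\<lambda>\<theta>'. G \<theta>' \<bullet> h) has_derivative (\<lambda>k. H k \<bullet> h)) (at \<theta>)"
    by (auto intro!: derivative_eq_intros dG)
  then have "((\<lambda>\<theta>'. (P \<theta>' - y) * dP \<theta>' h) has_derivative (\<lambda>k. H k \<bullet> h)) (at \<theta>)"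
    by (rule has_derivative_transform_within_open[OF _ \<open>open V\<close> \<open>\<theta> \<in> V\<close>]) (simp add: G_eq)
  ultimately have "(\<lambda>k. H k \<bullet> h) = (\<lambda>k. dP \<theta> k * dP \<theta> h)"
    by (rule has_derivative_unique[rotated])
  then show "H k \<bullet> h = (net_grad x \<theta> \<bullet> k) * (net_grad x \<theta> \<bullet> h)"
    by (metis inner_net_grad dP_def S_def)
qed

section \<open>Linearized SGD\<close>

lemma finite_batches: "finite (batches n B)"
  unfolding batches_def by (rule finite_subset[of _ "Pow {..<n}"]) auto

lemma card_batches: "card (batches n B) = n choose B"
  unfolding batches_def using n_subsets[of "{..<n}" B] by simp

lemma card_batches_containing:
  assumes "j < n" "B \<ge> 1"
  shows "card {S \<in> batches n B. j \<in> S} = (n - 1) choose (B - 1)"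
proof -
  have fin: "finite T" if "T \<subseteq> {..<n}" for T
    using that finite_subset by blast
  have "bij_betw (\<lambda>S. S - {j}) {S \<in> batches n B. j \<in> S} {T. T \<subseteq> {..<n} - {j} \<and> card T = B - 1}"
  proof (rule bij_betw_byWitness[where f' = "insert j"])
    show "(\<lambda>S. S - {j}) ` {S \<in> batches n B. j \<in> S} \<subseteq> {T. T \<subseteq> {..<n} - {j} \<and> card T = B - 1}"
      using fin by (auto simp: batches_def card_Diff_singleton_if)
    show "insert j ` {T. T \<subseteq> {..<n} - {j} \<and> card T = B - 1} \<subseteq> {S \<in> batches n B. j \<in> S}"
    proof
      fix S assume "S \<in> insert j ` {T. T \<subseteq> {..<n} - {j} \<and> card T = B - 1}"
      then obtain T where T: "T \<subseteq> {..<n} - {j}" "card T = B - 1" "S = insert j T"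
        by auto
      then have "finite T" "j \<notin> T"
        using fin by auto
      with T assms show "S \<in> {S \<in> batches n B. j \<in> S}"
        by (auto simp: batches_def)
    qed
  qed auto
  then have "card {S \<in> batches n B. j \<in> S} = card ({..<n} - {j}) choose (B - 1)"
    by (simp add: bij_betw_same_card n_subsets)
  then show ?thesis
    using \<open>j < n\<close> by simp
qed

lemma norm_funpow_Suc_sq_ge:
  fixes M :: "'p::real_inner \<Rightarrow> 'p"
  assumes lin: "linear M" and sym: "\<And>a b. M a \<bullet> b = a \<bullet> M b" and u: "norm u = 1"
  shows "(u \<bullet> M u)^2 * (norm ((M ^^ k) u))^2 \<le> (norm ((M ^^ Suc k) u))^2"
proof -
  define c where "c = u \<bullet> M u"
  define y where "y k = (M ^^ k) u" for k
  have y_Suc: "y (Suc k) = M (y k)" for k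
    by (simp add: y_def)
  txt \<open>By self-adjointness |y (k+1)|^2 = y k \<bullet> y (k+2), so the ratios |y (k+1)| / |y k| do not
    decrease; the first one is at least |c|.\<close>
  have "c^2 * (norm (y k))^2 \<le> (norm (y (Suc k)))^2"
  proof (induction k)
    case 0
    have "\<bar>c\<bar> \<le> norm (M u)"
      using Cauchy_Schwarz_ineq2[of u "M u"] u by (simp add: c_def)
    then have "c^2 \<le> (norm (M u))^2"
      by (metis abs_ge_zero power2_abs power_mono)
    then show ?case
      using u by (simp add: y_def)
  next
    case (Suc k)
    have "(norm (y (Suc k)))^2 = y k \<bullet> y (Suc (Suc k))"
      by (simp add: y_Suc power2_norm_eq_inner sym)
    also have "\<dots> \<le> norm (y k) * norm (y (Suc (Suc k)))"
      by (rule order_trans[OF abs_ge_self Cauchy_Schwarz_ineq2])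
    finally have cs: "(norm (y (Suc k)))^2 \<le> norm (y k) * norm (y (Suc (Suc k)))" .
    show ?case
    proof (cases "y k = 0")
      case True
      then show ?thesis
        using y_Suc linear_0[OF lin] by simp
    next
      case False
      have "(c^2 * (norm (y (Suc k)))^2) * (norm (y k))^2
          = (c^2 * (norm (y k))^2) * (norm (y (Suc k)))^2"
        by (simp add: algebra_simps)
      also have "\<dots> \<le> (norm (y (Suc k)))^2 * (norm (y (Suc k)))^2"
        using Suc.IH by (intro mult_right_mono) auto
      also have "\<dots> \<le> (norm (y k) * norm (y (Suc (Suc k))))^2"
        using cs by (metis power2_eq_square power_mono zero_le_power2)
      also have "\<dots> = (norm (y (Suc (Suc k))))^2 * (norm (y k))^2"
        by (simp add: algebra_simps power2_eq_square)
      finally show ?thesis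
        using False by simp
    qed
  qed
  then show ?thesis
    by (simp add: c_def y_def)
qed

lemma norm_funpow_ge_pow_rayleigh:
  fixes M :: "'p::real_inner \<Rightarrow> 'p"
  assumes lin: "linear M" and sym: "\<And>a b. M a \<bullet> b = a \<bullet> M b" and u: "norm u = 1"
  shows "\<bar>u \<bullet> M u\<bar> ^ k \<le> norm ((M ^^ k) u)"
proof -
  have "((u \<bullet> M u)^2)^k \<le> (norm ((M ^^ k) u))^2"
  proof (induction k)
    case (Suc k)
    have "((u \<bullet> M u)^2)^Suc k \<le> (u \<bullet> M u)^2 * (norm ((M ^^ k) u))^2"
      using Suc.IH by (simp add: mult_left_mono)
    also have "\<dots> \<le> (norm ((M ^^ Suc k) u))^2"
      by (rule norm_funpow_Suc_sq_ge[OF lin sym u])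
    finally show ?case .
  qed (use u in simp)
  moreover have "(\<bar>u \<bullet> M u\<bar>^k)^2 = ((u \<bullet> M u)^2)^k"
    by (metis power2_abs power_mult mult.commute)
  ultimately have "(\<bar>u \<bullet> M u\<bar>^k)^2 \<le> (norm ((M ^^ k) u))^2"
    by simp
  then show ?thesis
    by (rule power2_le_imp_le) simp
qed

locale linearized_sgd =
  fixes n B :: nat and \<eta> :: real and G H :: "nat \<Rightarrow> 'p::euclidean_space \<Rightarrow> 'p" and \<theta>s :: 'p
  assumes n_pos: "n \<ge> 1" and B_pos: "B \<ge> 1" and B_le: "B \<le> n" and \<eta>_pos: "\<eta> > 0"
    and grad_zero: "\<And>j. j < n \<Longrightarrow> G j \<theta>s = 0"
    and hess_linear: "\<And>j. j < n \<Longrightarrow> linear (H j)"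
    and hess_symmetric: "\<And>j a b. j < n \<Longrightarrow> H j a \<bullet> b = a \<bullet> H j b"
begin

definition mean_hessian :: "'p \<Rightarrow> 'p" where
  "mean_hessian v = (1 / real n) *\<^sub>R (\<Sum>j<n. H j v)"

definition mean_step :: "'p \<Rightarrow> 'p" where
  "mean_step v = v - \<eta> *\<^sub>R mean_hessian v"

lemma linear_mean_hessian: "linear mean_hessian"
  unfolding linear_iff mean_hessian_def
  by (simp add: hess_linear linear_add linear_scale sum.distrib scaleR_sum_right algebra_simps)

lemma linear_mean_step: "linear mean_step"
  using linear_mean_hessian unfolding mean_step_def linear_iff by (simp add: algebra_simps)

lemma linear_funpow_mean_step: "linear (mean_step ^^ t)"
  by (induction t) (simp_all add: linear_id[unfolded id_def] linear_compose[OF _ linear_mean_step, unfolded o_def])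

lemma inner_mean_step_commute: "mean_step a \<bullet> b = a \<bullet> mean_step b"
proof -
  have "mean_hessian a \<bullet> b = a \<bullet> mean_hessian b"
    unfolding mean_hessian_def using hess_symmetric
    by (simp add: inner_sum_left inner_sum_right)
  then show ?thesis
    by (simp add: mean_step_def inner_diff_left inner_diff_right)
qed

lemma card_batches_pos: "card (batches n B) > 0"
  using B_le by (simp add: card_batches)

text \<open>Every sample lies in the same number of batches, so averaging over batches turns a
  linearized step into mean_step.\<close>
lemma sum_lin_step:
  "(\<Sum>S\<in>batches n B. lin_step \<eta> B G H \<theta>s \<theta> S - \<theta>s) = real (card (batches n B)) *\<^sub>R mean_step (\<theta> - \<theta>s)"
proof -
  define w where "w = \<theta> - \<theta>s"
  define N where "N = real (card (batches n B))"
  have step: "lin_step \<eta> B G H \<theta>s \<theta> S - \<theta>s = w - (\<eta> / B) *\<^sub>R (\<Sum>j\<in>S. H j w)"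
    if "S \<in> batches n B" for S
  proof -
    have "(\<Sum>j\<in>S. G j \<theta>s + H j (\<theta> - \<theta>s)) = (\<Sum>j\<in>S. H j w)"
      using that grad_zero unfolding batches_def w_def by (intro sum.cong) auto
    then show ?thesis
      unfolding lin_step_def w_def by simp
  qed
  have "(\<Sum>S\<in>batches n B. \<Sum>j\<in>S. H j w) = (\<Sum>S\<in>batches n B. \<Sum>j\<in>{j. j \<in> {..<n} \<and> j \<in> S}. H j w)"
    by (intro sum.cong refl) (auto simp: batches_def)
  also have "\<dots> = (\<Sum>j<n. \<Sum>S\<in>{S. S \<in> batches n B \<and> j \<in> S}. H j w)"
    by (rule sum.swap_restrict) (auto simp: finite_batches)
  also have "\<dots> = (\<Sum>j<n. real ((n - 1) choose (B - 1)) *\<^sub>R H j w)"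
    by (intro sum.cong refl) (auto simp: card_batches_containing[OF _ B_pos] sum_constant_scaleR)
  also have "\<dots> = real ((n - 1) choose (B - 1)) *\<^sub>R (\<Sum>j<n. H j w)"
    by (simp add: scaleR_sum_right)
  finally have swap: "(\<Sum>S\<in>batches n B. \<Sum>j\<in>S. H j w) = real ((n - 1) choose (B - 1)) *\<^sub>R (\<Sum>j<n. H j w)" .
  have "real B * real (n choose B) = real n * real ((n - 1) choose (B - 1))"
    using times_binomial_minus1_eq[of B n] B_pos by (simp flip: of_nat_mult)
  then have "\<eta> / B * real ((n - 1) choose (B - 1)) = N * \<eta> / n"
    using B_pos n_pos by (simp add: N_def card_batches field_simps)
  then have "(\<Sum>S\<in>batches n B. w - (\<eta> / B) *\<^sub>R (\<Sum>j\<in>S. H j w)) = N *\<^sub>R mean_step w"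
    by (simp add: sum_subtractf scaleR_sum_right[symmetric] sum_constant_scaleR swap N_def
        mean_step_def mean_hessian_def algebra_simps)
  then show ?thesis
    by (simp add: step w_def N_def cong: sum.cong)
qed

lemma sum_lin_iter:
  "(\<Sum>bs\<in>{bs. length bs = t \<and> set bs \<subseteq> batches n B}. lin_iter \<eta> B G H \<theta>s \<theta>0 bs - \<theta>s)
     = real (card (batches n B)) ^ t *\<^sub>R (mean_step ^^ t) (\<theta>0 - \<theta>s)"
proof (induction t arbitrary: \<theta>0)
  case 0
  have "{bs. length bs = 0 \<and> set bs \<subseteq> batches n B} = {[]}"
    by auto
  then show ?case
    by (simp add: lin_iter_def)
next
  case (Suc t)
  define L where "L = {bs. set bs \<subseteq> batches n B \<and> length bs = t}"
  have lists_eq: "{bs. length bs = Suc t \<and> set bs \<subseteq> batches n B} = (\<lambda>(bs, S). S # bs) ` (L \<times> batches n B)"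
    using lists_length_Suc_eq[of "batches n B" t] by (simp add: L_def conj_commute)
  have inj: "inj_on (\<lambda>(bs, S). S # bs) (L \<times> batches n B)"
    by (auto simp: inj_on_def)
  have "(\<Sum>bs\<in>{bs. length bs = Suc t \<and> set bs \<subseteq> batches n B}. lin_iter \<eta> B G H \<theta>s \<theta>0 bs - \<theta>s)
      = (\<Sum>(bs, S)\<in>L \<times> batches n B. lin_iter \<eta> B G H \<theta>s \<theta>0 (S # bs) - \<theta>s)"
    unfolding lists_eq by (subst sum.reindex[OF inj]) (simp add: case_prod_beta o_def)
  also have "\<dots> = (\<Sum>S\<in>batches n B. \<Sum>bs\<in>L. lin_iter \<eta> B G H \<theta>s (lin_step \<eta> B G H \<theta>s \<theta>0 S) bs - \<theta>s)"
    by (subst sum.cartesian_product[symmetric])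
      (simp add: sum.swap[of _ _ "batches n B"] lin_iter_def case_prod_beta)
  also have "\<dots> = (\<Sum>S\<in>batches n B. real (card (batches n B)) ^ t *\<^sub>R
      (mean_step ^^ t) (lin_step \<eta> B G H \<theta>s \<theta>0 S - \<theta>s))"
    using Suc.IH by (simp add: L_def conj_commute)
  also have "\<dots> = real (card (batches n B)) ^ t *\<^sub>R
      (mean_step ^^ t) (\<Sum>S\<in>batches n B. lin_step \<eta> B G H \<theta>s \<theta>0 S - \<theta>s)"
    by (simp add: linear_sum[OF linear_funpow_mean_step] scaleR_sum_right)
  also have "\<dots> = real (card (batches n B)) ^ Suc t *\<^sub>R (mean_step ^^ Suc t) (\<theta>0 - \<theta>s)"
    unfolding sum_lin_step
    by (simp add: linear_scale[OF linear_funpow_mean_step] funpow_swap1 mult.commute)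
  finally show ?case .
qed

lemma norm_funpow_mean_step_le_expected_dev:
  "norm ((mean_step ^^ t) (\<theta>0 - \<theta>s)) \<le> expected_dev n B \<eta> G H \<theta>s \<theta>0 t"
proof -
  define N where "N = real (card (batches n B))"
  have "N > 0"
    using card_batches_pos by (simp add: N_def)
  have "norm (N ^ t *\<^sub>R (mean_step ^^ t) (\<theta>0 - \<theta>s))
      \<le> (\<Sum>bs\<in>{bs. length bs = t \<and> set bs \<subseteq> batches n B}. norm (lin_iter \<eta> B G H \<theta>s \<theta>0 bs - \<theta>s))"
    unfolding N_def sum_lin_iter[symmetric] by (rule norm_sum)
  then show ?thesis
    using \<open>N > 0\<close> by (simp add: expected_dev_def N_def field_simps)
qed

lemma expected_dev_tendsto_infinity:
  assumes "norm v = 1" and c: "\<bar>v \<bullet> mean_step v\<bar> > 1" and "r > 0"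
  shows "((\<lambda>t. ereal (expected_dev n B \<eta> G H \<theta>s (\<theta>s + r *\<^sub>R v) t)) \<longlongrightarrow> \<infinity>) sequentially"
  unfolding tendsto_PInfty
proof
  fix x :: real
  define c where "c = \<bar>v \<bullet> mean_step v\<bar>"
  have lower: "r * c ^ t \<le> expected_dev n B \<eta> G H \<theta>s (\<theta>s + r *\<^sub>R v) t" for t
  proof -
    have "r * c ^ t \<le> r * norm ((mean_step ^^ t) v)"
      using norm_funpow_ge_pow_rayleigh[OF linear_mean_step inner_mean_step_commute \<open>norm v = 1\<close>]
        \<open>r > 0\<close> by (simp add: c_def)
    also have "\<dots> = norm ((mean_step ^^ t) (\<theta>s + r *\<^sub>R v - \<theta>s))"
      using \<open>r > 0\<close> by (simp add: linear_scale[OF linear_funpow_mean_step])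
    also have "\<dots> \<le> expected_dev n B \<eta> G H \<theta>s (\<theta>s + r *\<^sub>R v) t"
      by (rule norm_funpow_mean_step_le_expected_dev)
    finally show ?thesis .
  qed
  obtain N where N: "max x 0 / r < c ^ N"
    using real_arch_pow[of c "max x 0 / r"] c by (auto simp: c_def)
  have "x < expected_dev n B \<eta> G H \<theta>s (\<theta>s + r *\<^sub>R v) t" if "t \<ge> N" for t
  proof -
    have "c ^ N \<le> c ^ t"
      using that c by (intro power_increasing) (auto simp: c_def)
    then have "r * c ^ N \<le> r * c ^ t"
      using \<open>r > 0\<close> by simp
    moreover have "max x 0 < r * c ^ N"
      using N \<open>r > 0\<close> by (simp add: field_simps)
    ultimately show ?thesis
      using lower[of t] by linarith
  qed
  then show "\<forall>\<^sub>F t in sequentially. ereal x < ereal (expected_dev n B \<eta> G H \<theta>s (\<theta>s + r *\<^sub>R v) t)"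
    unfolding eventually_sequentially by auto
qed

lemma quadratic_form_le_if_stable:
  assumes "\<epsilon> > 0"
    and stab: "\<forall>\<theta>0\<in>ball \<theta>s \<epsilon>. limsup (\<lambda>t. ereal (expected_dev n B \<eta> G H \<theta>s \<theta>0 t)) \<le> ereal \<epsilon>"
  shows "u \<bullet> mean_hessian u \<le> (2 / \<eta>) * (u \<bullet> u)"
proof (rule ccontr)
  assume "\<not> ?thesis"
  then have gt: "u \<bullet> mean_hessian u > (2 / \<eta>) * (u \<bullet> u)"
    by simp
  then have "u \<noteq> 0"
    by (auto simp: linear_0[OF linear_mean_hessian])
  define v where "v = u /\<^sub>R norm u"
  have "norm v = 1"
    using \<open>u \<noteq> 0\<close> by (simp add: v_def)
  txt \<open>In the direction v the averaged step multiplies by less than -1, so the linearized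
    iterates started at \<theta>s + (\<epsilon>/2) v blow up in expectation.\<close>
  have "v \<bullet> mean_hessian v = (u \<bullet> mean_hessian u) / (u \<bullet> u)"
    unfolding v_def using \<open>u \<noteq> 0\<close>
    by (simp add: linear_scale[OF linear_mean_hessian] power2_norm_eq_inner[symmetric] field_simps
        power2_eq_square)
  also have "\<dots> > 2 / \<eta>"
    using gt \<open>u \<noteq> 0\<close> by (simp add: field_simps)
  finally have "\<eta> * (v \<bullet> mean_hessian v) > 2"
    using \<eta>_pos by (simp add: field_simps)
  moreover have "v \<bullet> mean_step v = 1 - \<eta> * (v \<bullet> mean_hessian v)"
    using \<open>norm v = 1\<close> by (simp add: mean_step_def inner_diff_right power2_norm_eq_inner[symmetric])
  ultimately have "\<bar>v \<bullet> mean_step v\<bar> > 1"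
    by simp
  have "\<theta>s + (\<epsilon> / 2) *\<^sub>R v \<in> ball \<theta>s \<epsilon>"
    using \<open>\<epsilon> > 0\<close> \<open>norm v = 1\<close> by (simp add: dist_norm)
  moreover have "limsup (\<lambda>t. ereal (expected_dev n B \<eta> G H \<theta>s (\<theta>s + (\<epsilon> / 2) *\<^sub>R v) t)) = \<infinity>"
    using expected_dev_tendsto_infinity[OF \<open>norm v = 1\<close> \<open>\<bar>v \<bullet> mean_step v\<bar> > 1\<close>] \<open>\<epsilon> > 0\<close>
    by (intro lim_imp_Limsup) simp_all
  ultimately show False
    using stab by force
qed

end

section \<open>The mean gradient direction\<close>

definition mean_net_grad :: "(nat \<Rightarrow> 'a::euclidean_space) \<Rightarrow> nat \<Rightarrow> ('a, 'k::finite) params \<Rightarrow> ('a, 'k) params"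
  where "mean_net_grad xs n \<theta> = (1 / real n) *\<^sub>R (\<Sum>j<n. net_grad (xs j) \<theta>)"

lemma sq_inner_mean_le_mean_sq_inner:
  fixes g :: "nat \<Rightarrow> 'p::real_inner"
  assumes "n \<ge> 1"
  defines "u \<equiv> (1 / real n) *\<^sub>R (\<Sum>j<n. g j)"
  shows "(u \<bullet> u)^2 \<le> (1 / real n) * (\<Sum>j<n. (g j \<bullet> u)^2)"
proof -
  have "u \<bullet> u = ((1 / real n) *\<^sub>R (\<Sum>j<n. g j)) \<bullet> u"
    by (simp add: u_def)
  then have "u \<bullet> u = (\<Sum>j<n. g j \<bullet> u) / n"
    by (simp add: inner_sum_left)
  then have "(u \<bullet> u)^2 = (\<Sum>j<n. g j \<bullet> u)^2 / (real n)^2"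
    by (simp add: power_divide)
  also have "\<dots> \<le> (real n * (\<Sum>j<n. (g j \<bullet> u)^2)) / (real n)^2"
    using Cauchy_Schwarz_ineq_sum[of "\<lambda>_. 1" "\<lambda>j. g j \<bullet> u" "{..<n}"]
    by (intro divide_right_mono) auto
  also have "\<dots> = (1 / real n) * (\<Sum>j<n. (g j \<bullet> u)^2)"
    using assms(1) by (simp add: power2_eq_square)
  finally show ?thesis .
qed

lemma mean_net_grad_eq:
  fixes W1 :: "'a::euclidean_space ^ 'k::finite" and b1 :: "real ^ 'k" and xs :: "nat \<Rightarrow> 'a"
  assumes "n \<ge> 1"
  defines "A \<equiv> \<lambda>i. {j. j < n \<and> xs j \<bullet> W1 $ i + b1 $ i > 0}"
  shows "mean_net_grad xs n (W1, b1, w2, b2) =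
    ((\<chi> i. w2 $ i *\<^sub>R ((1 / real n) *\<^sub>R (\<Sum>j\<in>A i. xs j))),
     (\<chi> i. w2 $ i * (real (card (A i)) / n)),
     (\<chi> i. (\<Sum>j\<in>A i. xs j \<bullet> W1 $ i + b1 $ i) / n), 1)"
proof -
  have "(\<Sum>j<n. fst (net_grad (xs j) (W1, b1, w2, b2))) $ i = w2 $ i *\<^sub>R (\<Sum>j\<in>A i. xs j)"
    "(\<Sum>j<n. fst (snd (net_grad (xs j) (W1, b1, w2, b2)))) $ i = w2 $ i * real (card (A i))"
    "(\<Sum>j<n. fst (snd (snd (net_grad (xs j) (W1, b1, w2, b2))))) $ i = (\<Sum>j\<in>A i. xs j \<bullet> W1 $ i + b1 $ i)"
    for i
    by (simp_all add: net_grad_def preact_def A_def relu_eq_if sum.inter_filter[symmetric]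
        scaleR_sum_right)
  moreover have "(\<Sum>j<n. snd (snd (snd (net_grad (xs j) (W1, b1, w2, b2))))) = real n"
    by (simp add: net_grad_def)
  ultimately show ?thesis
    using assms(1) by (simp add: mean_net_grad_def prod_eq_iff vec_eq_iff fst_sum snd_sum)
qed

lemma radon_norm_net_le_norm_mean_net_grad:
  fixes \<theta> :: "('a::euclidean_space, 'k::finite) params"
  assumes "n \<ge> 1"
  shows "radon_norm (g_weight xs n) (net \<theta>) \<le> ((norm (mean_net_grad xs n \<theta>))^2 - 1) / 2"
proof -
  obtain W1 b1 w2 b2 where \<theta>: "\<theta> = (W1, b1, w2, b2)"
    by (cases \<theta>) auto
  define A where "A i = {j. j < n \<and> xs j \<bullet> W1 $ i + b1 $ i > 0}" for i
  define Sx where "Sx i = (1 / real n) *\<^sub>R (\<Sum>j\<in>A i. xs j)" for i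
  define p where "p i = real (card (A i)) / n" for i
  define Z where "Z i = (\<Sum>j\<in>A i. xs j \<bullet> W1 $ i + b1 $ i) / n" for i
  define Q where "Q i = (Z i)^2 + (w2 $ i)^2 * ((norm (Sx i))^2 + (p i)^2)" for i
  have "mean_net_grad xs n \<theta> = ((\<chi> i. w2 $ i *\<^sub>R Sx i), (\<chi> i. w2 $ i * p i), (\<chi> i. Z i), 1)"
    by (simp add: \<theta> mean_net_grad_eq[OF assms] A_def Sx_def p_def Z_def)
  then have norm_sq: "(norm (mean_net_grad xs n \<theta>))^2 = 1 + (\<Sum>i\<in>UNIV. Q i)"
    unfolding Q_def power2_norm_eq_inner
    by (simp add: inner_prod_def inner_vec_def sum.distrib power2_eq_square algebra_simps)
  have neuron: "(if W1 $ i = 0 then 0 else \<bar>w2 $ i\<bar> * norm (W1 $ i)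
      * g_weight xs n (W1 $ i /\<^sub>R norm (W1 $ i)) (- b1 $ i / norm (W1 $ i))) \<le> Q i / 2" for i
  proof (cases "W1 $ i = 0")
    case True
    then show ?thesis
      by (simp add: Q_def)
  next
    case False
    have "\<bar>w2 $ i\<bar> * norm (W1 $ i) * g_weight xs n (W1 $ i /\<^sub>R norm (W1 $ i)) (- b1 $ i / norm (W1 $ i))
        \<le> \<bar>w2 $ i\<bar> * (norm (W1 $ i) * g_tilde xs n (W1 $ i /\<^sub>R norm (W1 $ i)) (- b1 $ i / norm (W1 $ i)))"
      by (simp add: mult_left_mono g_weight_le_g_tilde mult.assoc)
    also have "\<dots> = Z i * (\<bar>w2 $ i\<bar> * sqrt ((norm (Sx i))^2 + (p i)^2))"
      using norm_mult_g_tilde[OF False assms, of xs "b1 $ i"]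
      by (simp add: A_def Sx_def p_def Z_def)
    also have "\<dots> \<le> ((Z i)^2 + (\<bar>w2 $ i\<bar> * sqrt ((norm (Sx i))^2 + (p i)^2))^2) / 2"
      using sum_squares_bound[of "Z i" "\<bar>w2 $ i\<bar> * sqrt ((norm (Sx i))^2 + (p i)^2)"] by simp
    also have "\<dots> = Q i / 2"
      by (simp add: Q_def power_mult_distrib)
    finally show ?thesis
      using False by simp
  qed
  have "radon_norm (g_weight xs n) (net \<theta>) \<le> (\<Sum>i\<in>UNIV. if W1 $ i = 0 then 0 else \<bar>w2 $ i\<bar>
      * norm (W1 $ i) * g_weight xs n (W1 $ i /\<^sub>R norm (W1 $ i)) (- b1 $ i / norm (W1 $ i)))"
    unfolding \<theta> by (rule radon_norm_net_le[where g = "g_weight xs n", OF g_weight_nonneg g_weight_uminus])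
  also have "\<dots> \<le> (\<Sum>i\<in>UNIV. Q i / 2)"
    by (rule sum_mono) (rule neuron)
  also have "\<dots> = ((norm (mean_net_grad xs n \<theta>))^2 - 1) / 2"
    by (simp add: norm_sq sum_divide_distrib)
  finally show ?thesis .
qed

lemma linearly_stable_imp_sq_norm_mean_net_grad_le:
  fixes \<theta> :: "('a::euclidean_space, 'k::finite) params"
  assumes "1 \<le> n" and "1 \<le> B" and "B \<le> n" and "\<eta> > 0"
    and interp: "\<And>j. j < n \<Longrightarrow> net \<theta> (xs j) = ys j" and "linearly_stable xs ys n B \<eta> \<theta>"
  shows "(norm (mean_net_grad xs n \<theta>))^2 \<le> 2 / \<eta>"
proof -
  obtain \<epsilon> G H where "\<epsilon> > 0"
    and twice: "\<And>j. j < n \<Longrightarrow> twice_diff_at (\<lambda>\<theta>. (net \<theta> (xs j) - ys j)^2 / 2) \<theta> (G j) (H j)"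
    and stab: "\<forall>\<theta>0\<in>ball \<theta> \<epsilon>. limsup (\<lambda>t. ereal (expected_dev n B \<eta> G H \<theta> \<theta>0 t)) \<le> ereal \<epsilon>"
    using assms(6) unfolding linearly_stable_def eps_linearly_stable_def sample_loss_def[abs_def]
    by blast
  have G0: "G j \<theta> = 0"
    and H: "H j k \<bullet> h = (net_grad (xs j) \<theta> \<bullet> k) * (net_grad (xs j) \<theta> \<bullet> h)" if "j < n" for j k h
    using interpolating_loss_gradient_hessian[OF twice interp] that by blast+
  have "linear (H j)" if "j < n" for j
    using twice[OF that] unfolding twice_diff_at_def by (metis has_derivative_linear)
  moreover have "H j a \<bullet> b = a \<bullet> H j b" if "j < n" for j a b
    using H[OF that] by (simp add: inner_commute)
  ultimately interpret linearized_sgd n B \<eta> G H \<theta>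
    using assms G0 by (intro linearized_sgd.intro) auto
  define u where "u = mean_net_grad xs n \<theta>"
  have "(u \<bullet> u)^2 \<le> (1 / real n) * (\<Sum>j<n. (net_grad (xs j) \<theta> \<bullet> u)^2)"
    unfolding u_def mean_net_grad_def by (rule sq_inner_mean_le_mean_sq_inner[OF assms(1)])
  also have "\<dots> = (1 / real n) * (\<Sum>j<n. H j u \<bullet> u)"
    by (simp add: H power2_eq_square)
  also have "\<dots> = u \<bullet> mean_hessian u"
    by (simp add: mean_hessian_def inner_sum_right inner_commute)
  also have "\<dots> \<le> (2 / \<eta>) * (u \<bullet> u)"
    by (rule quadratic_form_le_if_stable[OF \<open>\<epsilon> > 0\<close> stab])
  finally have "(u \<bullet> u) * (u \<bullet> u) \<le> (2 / \<eta>) * (u \<bullet> u)"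
    by (simp add: power2_eq_square)
  then show ?thesis
    using \<open>\<eta> > 0\<close> unfolding u_def power2_norm_eq_inner
    by (cases "mean_net_grad xs n \<theta> = 0") (auto intro: mult_right_le_imp_le)
qed

theorem theorem1:
  fixes xs :: "nat \<Rightarrow> 'a::euclidean_space" and ys :: "nat \<Rightarrow> real"
    and n B :: nat and \<eta> :: real and f :: "'a \<Rightarrow> real"
  assumes "1 \<le> n" and "1 \<le> B" and "B \<le> n" and "\<eta> > 0"
    and "stable_solution TYPE('k::finite) xs ys n B \<eta> f"
    and "\<forall>j<n. xs j \<notin> knot_set f"
  shows "radon_norm (g_weight xs n) f \<le> 1 / \<eta> - 1 / 2"
proof -
  obtain \<theta> :: "('a, 'k) params" where "net \<theta> = f" and "\<And>j. j < n \<Longrightarrow> net \<theta> (xs j) = ys j"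
    and "linearly_stable xs ys n B \<eta> \<theta>"
    using assms(5) unfolding stable_solution_def by blast
  then have "(norm (mean_net_grad xs n \<theta>))^2 \<le> 2 / \<eta>"
    using linearly_stable_imp_sq_norm_mean_net_grad_le assms(1-4) by blast
  with radon_norm_net_le_norm_mean_net_grad[OF assms(1), of xs \<theta>] \<open>net \<theta> = f\<close> show ?thesis
    by simp
qed

end
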